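(* For every $\Delta^0_2$ set $X$ with $\emptyset'\not\leq_T X$, there exists a $\Delta^0_2$ function $f:\omega\to\omega$ such that $X$ computes no function $g:\omega\to\omega$ with $g(x)\neq f(x)$ for all $x\in\omega$.
   Context: A set or function is $\Delta^0_2$ if it is computable from $\emptyset'$. A function $g$ with $g(x)\neq f(x)$ for all $x$ is called $f$-diagonalizing. *)

theory Defs
  imports Main "HOL-Library.Nat_Bijection"
begin

text \<open>Programs for partial recursive functions relative to an oracle
(Kleene's mu-recursive functions with an oracle function symbol).\<close>

datatype rf = Zero | Succ | Proj nat | Oracle | Comp rf "rf list" | Prim rf rf | Mu rf

inductive evalo :: "(nat \<Rightarrow> nat) \<Rightarrow> rf \<Rightarrow> nat list \<Rightarrow> nat \<Rightarrow> bool"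
  for orc :: "nat \<Rightarrow> nat" where
  ev_zero: "evalo orc Zero xs 0"
| ev_succ: "evalo orc Succ (x # xs) (Suc x)"
| ev_proj: "i < length xs \<Longrightarrow> evalo orc (Proj i) xs (xs ! i)"
| ev_oracle: "evalo orc Oracle (x # xs) (orc x)"
| ev_comp: "list_all2 (\<lambda>g y. evalo orc g xs y) gs ys \<Longrightarrow> evalo orc f ys z \<Longrightarrow> evalo orc (Comp f gs) xs z"
| ev_prim0: "evalo orc f xs z \<Longrightarrow> evalo orc (Prim f g) (0 # xs) z"
| ev_primS: "evalo orc (Prim f g) (n # xs) y \<Longrightarrow> evalo orc g (n # y # xs) z \<Longrightarrow> evalo orc (Prim f g) (Suc n # xs) z"
| ev_mu: "evalo orc f (n # xs) 0 \<Longrightarrow> (\<forall>m<n. \<exists>v. evalo orc f (m # xs) (Suc v)) \<Longrightarrow> evalo orc (Mu f) xs n"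

primrec enc :: "rf \<Rightarrow> nat" where
  "enc Zero = prod_encode (0, 0)"
| "enc Succ = prod_encode (1, 0)"
| "enc (Proj i) = prod_encode (2, i)"
| "enc Oracle = prod_encode (3, 0)"
| "enc (Comp f gs) = prod_encode (4, prod_encode (enc f, list_encode (map enc gs)))"
| "enc (Prim f g) = prod_encode (5, prod_encode (enc f, enc g))"
| "enc (Mu f) = prod_encode (6, enc f)"

definition chi :: "nat set \<Rightarrow> nat \<Rightarrow> nat" where
  "chi A n = (if n \<in> A then 1 else 0)"

definition comp_by :: "(nat \<Rightarrow> nat) \<Rightarrow> (nat \<Rightarrow> nat) \<Rightarrow> bool" where
  "comp_by orc f \<longleftrightarrow> (\<exists>p. \<forall>x. evalo orc p [x] (f x))"

definition turing_le :: "nat set \<Rightarrow> nat set \<Rightarrow> bool" where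
  "turing_le A B \<longleftrightarrow> comp_by (chi B) (chi A)"

text \<open>The halting set emptyset' = {e. phi_e(e) converges} (unrelativised: oracle constantly 0).\<close>
definition halting :: "nat set" where
  "halting = {n. \<exists>p. enc p = n \<and> (\<exists>v. evalo (\<lambda>_. 0) p [n] v)}"

definition Delta02_fun :: "(nat \<Rightarrow> nat) \<Rightarrow> bool" where
  "Delta02_fun f \<longleftrightarrow> comp_by (chi halting) f"

definition Delta02_set :: "nat set \<Rightarrow> bool" where
  "Delta02_set X \<longleftrightarrow> Delta02_fun (chi X)"

end

theory Submission
  imports Defs
begin

text \<open>For \<open>x = \<langle>e, n\<rangle>\<close> let \<open>diag_fun X x\<close> be the output of the oracle program coded by \<open>e\<close>
  on input \<open>x\<close>, run with the finite oracle \<open>X\<restriction>s(n)\<close>, where \<open>s(n)\<close> bounds the search for a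
  witness of \<open>n \<in> \<emptyset>'\<close>. Since \<open>X \<le>\<^sub>T \<emptyset>'\<close>, this function is \<open>\<Delta>\<^sup>0\<^sub>2\<close>: \<open>\<emptyset>'\<close> computes \<open>s\<close> and
  \<open>X\<restriction>s(n)\<close>, decides whether the finite run converges, and if so finds its output.
  Suppose \<open>X\<close> computes \<open>g\<close> with \<open>g x \<noteq> diag_fun X x\<close> for all \<open>x\<close>, by the program coded by \<open>e\<close>.
  By the use principle every computation of \<open>g \<langle>e, n\<rangle>\<close> queries \<open>X\<close> at some argument \<open>\<ge> s(n)\<close>,
  for otherwise it is a run with oracle \<open>X\<restriction>s(n)\<close> and \<open>diag_fun X \<langle>e, n\<rangle> = g \<langle>e, n\<rangle>\<close>.
  So the least witness of that computation, an \<open>X\<close>-computable function of \<open>n\<close>, dominates \<open>s\<close>,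
  and \<open>X\<close> computes \<open>\<emptyset>'\<close>.

  Convergence of oracle programs is expressed by numerical codes of finite derivations, whose
  correctness is decided by primitive recursive expressions that compile into programs; a
  derivation coded by \<open>w\<close> consults the oracle only at arguments \<open>\<le> w\<close>.\<close>

section \<open>Oracle programs\<close>

lemma comp_by_oracle: "comp_by orc orc"
  unfolding comp_by_def by (intro exI[of _ Oracle]) (auto intro: ev_oracle)

inductive_cases zeroE: "evalo orc Zero xs z"
  and succE: "evalo orc Succ xs z"
  and projE: "evalo orc (Proj i) xs z"
  and oracleE: "evalo orc Oracle xs z"
  and compE: "evalo orc (Comp f gs) xs z"
  and primE: "evalo orc (Prim f g) xs z"
  and muE: "evalo orc (Mu f) xs z"

lemma list_all2_unique:
  "list_all2 (\<lambda>x y. \<forall>y'. R x y' \<longrightarrow> y = y') xs ys \<Longrightarrow> list_all2 R xs ys' \<Longrightarrow> ys = ys'"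
  by (induction xs arbitrary: ys ys') (auto simp: list_all2_Cons1)

lemma evalo_deterministic: "evalo orc p xs a \<Longrightarrow> evalo orc p xs b \<Longrightarrow> a = b"
proof (induction arbitrary: b rule: evalo.induct)
  case (ev_comp xs gs ys f z)
  from ev_comp.prems obtain ys' where args: "list_all2 (\<lambda>g y. evalo orc g xs y) gs ys'"
    and "evalo orc f ys' b"
    by (rule compE) blast
  moreover have "list_all2 (\<lambda>g y. \<forall>y'. evalo orc g xs y' \<longrightarrow> y = y') gs ys"
    using ev_comp(1) by (rule list_all2_mono) blast
  then have "ys = ys'" using args by (rule list_all2_unique)
  ultimately show ?case using ev_comp.IH by blast
next
  case (ev_prim0 f xs z g)
  from ev_prim0.prems show ?case by (rule primE) (simp_all add: ev_prim0.IH)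
next
  case (ev_primS f g n xs y z)
  from ev_primS.prems show ?case
  proof (rule primE)
    fix n' xs' y' assume "Suc n # xs = Suc n' # xs'" "evalo orc (Prim f g) (n' # xs') y'"
      "evalo orc g (n' # y' # xs') b"
    then show "z = b" using ev_primS.IH by auto
  qed simp
next
  case (ev_mu f n xs)
  from ev_mu.prems obtain n' where b: "b = n'" and z: "evalo orc f (n' # xs) 0"
    and below: "\<forall>m<n'. \<exists>v. evalo orc f (m # xs) (Suc v)"
    by (rule muE) blast
  have "\<not> n < n'" using below ev_mu.IH(1) by fastforce
  moreover have "\<not> n' < n" using z ev_mu.IH(2) by fastforce
  ultimately show ?case using b by simp
qed (auto elim: zeroE succE projE oracleE)

lemma enc_injective: "enc p = enc q \<Longrightarrow> p = q"
proof (induction p arbitrary: q)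
  case (Comp f gs)
  from Comp.prems obtain f' gs' where q: "q = Comp f' gs'" by (cases q) auto
  with Comp.prems have "enc f = enc f'" "list_encode (map enc gs) = list_encode (map enc gs')" by auto
  then have "f = f'" "map enc gs = map enc gs'" using Comp.IH(1) by (auto simp: list_encode_eq)
  moreover have "gs = gs'" using list.inj_map_strong[OF _ \<open>map enc gs = map enc gs'\<close>] Comp.IH(2) by blast
  ultimately show ?case using q by simp
next
  case (Prim f g) then show ?case by (cases q) auto
next
  case (Mu f) then show ?case by (cases q) auto
qed (case_tac q; auto)+

primrec const_prog :: "nat \<Rightarrow> rf" where
  "const_prog 0 = Zero"
| "const_prog (Suc v) = Comp Succ [const_prog v]"

lemma evalo_const_prog: "evalo orc (const_prog v) xs v"
proof (induction v)
  case 0 then show ?case by (simp add: ev_zero)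
next
  case (Suc v)
  have "list_all2 (\<lambda>g y. evalo orc g xs y) [const_prog v] [v]" using Suc by simp
  then show ?case by (simp, rule ev_comp) (rule ev_succ)
qed

lemma evalo_Comp_const_progs: "evalo orc (Comp p (map const_prog vs)) xs z \<longleftrightarrow> evalo orc p vs z"
proof
  assume "evalo orc (Comp p (map const_prog vs)) xs z"
  then obtain ys where ys: "list_all2 (\<lambda>g y. evalo orc g xs y) (map const_prog vs) ys" "evalo orc p ys z"
    by (rule compE) blast
  have "\<forall>v y'. evalo orc (const_prog v) xs y' \<longrightarrow> v = y'"
    using evalo_deterministic evalo_const_prog by blast
  then have "list_all2 (\<lambda>g y. \<forall>y'. evalo orc g xs y' \<longrightarrow> y = y') (map const_prog vs) vs"
    by (simp add: list_all2_conv_all_nth)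
  then have "vs = ys" using ys(1) by (rule list_all2_unique)
  then show "evalo orc p vs z" using ys(2) by simp
next
  assume "evalo orc p vs z"
  then show "evalo orc (Comp p (map const_prog vs)) xs z"
    by (intro ev_comp[where ys = vs]) (auto simp: list_all2_conv_all_nth evalo_const_prog)
qed

section \<open>Primitive recursive expressions over computable functions\<close>

text \<open>Variables are de Bruijn indices into the environment; in \<open>Rec n b s\<close> the step \<open>s\<close> is
  evaluated in the environment \<open>i # acc # env\<close>.\<close>

datatype pexp = V nat | Z | S pexp | Fn "nat \<Rightarrow> nat" pexp | Cp pexp "pexp list" | Rec pexp pexp pexp

primrec eval :: "pexp \<Rightarrow> nat list \<Rightarrow> nat" where
  "eval (V i) env = env ! i"
| "eval Z env = 0"
| "eval (S e) env = Suc (eval e env)"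
| "eval (Fn F e) env = F (eval e env)"
| "eval (Cp e as) env = eval e (map (\<lambda>a. eval a env) as)"
| "eval (Rec n b s) env = rec_nat (eval b env) (\<lambda>i acc. eval s (i # acc # env)) (eval n env)"

primrec scoped :: "nat \<Rightarrow> pexp \<Rightarrow> bool" where
  "scoped k (V i) = (i < k)"
| "scoped k Z = True"
| "scoped k (S e) = scoped k e"
| "scoped k (Fn F e) = scoped k e"
| "scoped k (Cp e as) = (scoped (length as) e \<and> list_all (scoped k) as)"
| "scoped k (Rec n b s) = (scoped k n \<and> scoped k b \<and> scoped (Suc (Suc k)) s)"

primrec fns_comp_by :: "(nat \<Rightarrow> nat) \<Rightarrow> pexp \<Rightarrow> bool" where
  "fns_comp_by orc (V i) = True"
| "fns_comp_by orc Z = True"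
| "fns_comp_by orc (S e) = fns_comp_by orc e"
| "fns_comp_by orc (Fn F e) = (comp_by orc F \<and> fns_comp_by orc e)"
| "fns_comp_by orc (Cp e as) = (fns_comp_by orc e \<and> list_all (fns_comp_by orc) as)"
| "fns_comp_by orc (Rec n b s) = (fns_comp_by orc n \<and> fns_comp_by orc b \<and> fns_comp_by orc s)"

lemma evalo_Prim_rec_nat:
  assumes b: "evalo orc pb env bv"
    and s: "\<And>i acc. evalo orc pstep (i # acc # env) (sf i acc)"
  shows "evalo orc (Prim pb pstep) (n # env) (rec_nat bv sf n)"
proof (induction n)
  case 0 then show ?case using b by (simp add: ev_prim0)
next
  case (Suc n) then show ?case using s by (auto intro: ev_primS)
qed

lemma evalo_Proj_list:
  "list_all2 (\<lambda>g y. evalo orc g env y) (map Proj [0..<length env]) env"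
  by (auto simp: list_all2_conv_all_nth intro: ev_proj)

lemma programs_for_pexp_list:
  assumes "\<forall>a\<in>set as. \<exists>p. \<forall>env. length env = k \<longrightarrow> evalo orc p env (eval a env)"
  shows "\<exists>qs. \<forall>env. length env = k \<longrightarrow> list_all2 (\<lambda>g y. evalo orc g env y) qs (map (\<lambda>a. eval a env) as)"
  using assms
proof (induction as)
  case Nil then show ?case by auto
next
  case (Cons a as)
  then obtain qs where qs: "\<forall>env. length env = k \<longrightarrow> list_all2 (\<lambda>g y. evalo orc g env y) qs (map (\<lambda>a. eval a env) as)" by auto
  from Cons.prems obtain p where "\<forall>env. length env = k \<longrightarrow> evalo orc p env (eval a env)" by auto
  with qs show ?case by (intro exI[of _ "p # qs"]) auto
qed

lemma program_for_Rec:
  assumes pn: "\<forall>env. length env = k \<longrightarrow> evalo orc pn env (eval n env)"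
    and pb: "\<forall>env. length env = k \<longrightarrow> evalo orc pb env (eval b env)"
    and ps: "\<forall>env. length env = Suc (Suc k) \<longrightarrow> evalo orc ps env (eval s env)"
  shows "\<forall>env. length env = k \<longrightarrow> evalo orc (Comp (Prim pb ps) (pn # map Proj [0..<k])) env (eval (Rec n b s) env)"
proof (intro allI impI)
  fix env :: "nat list" assume len: "length env = k"
  have "list_all2 (\<lambda>g y. evalo orc g env y) (pn # map Proj [0..<k]) (eval n env # env)"
    using pn len evalo_Proj_list[of orc env] by auto
  moreover have "evalo orc (Prim pb ps) (eval n env # env) (eval (Rec n b s) env)"
    using evalo_Prim_rec_nat[of orc pb env "eval b env" ps "\<lambda>i acc. eval s (i # acc # env)"] pb ps len by auto
  ultimately show "evalo orc (Comp (Prim pb ps) (pn # map Proj [0..<k])) env (eval (Rec n b s) env)"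
    by (rule ev_comp)
qed

lemma program_for_pexp:
  "scoped k e \<Longrightarrow> fns_comp_by orc e \<Longrightarrow> \<exists>p. \<forall>env. length env = k \<longrightarrow> evalo orc p env (eval e env)"
proof (induction e arbitrary: k)
  case (V i) then show ?case by (auto intro!: exI[of _ "Proj i"] ev_proj)
next
  case Z then show ?case by (auto intro!: exI[of _ "Zero"] ev_zero)
next
  case (S e)
  then obtain p where p: "\<forall>env. length env = k \<longrightarrow> evalo orc p env (eval e env)" using S.IH[of k] S.prems by fastforce
  show ?case
    by (rule exI[of _ "Comp Succ [p]"]) (auto intro!: ev_comp[where ys="[_]"] ev_succ p[rule_format])
next
  case (Fn F e)
  then obtain p where p: "\<forall>env. length env = k \<longrightarrow> evalo orc p env (eval e env)" using Fn.IH[of k] Fn.prems by fastforce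
  from Fn obtain q where q: "\<forall>x. evalo orc q [x] (F x)" by (auto simp: comp_by_def)
  show ?case
    by (rule exI[of _ "Comp q [p]"]) (auto intro!: ev_comp[where ys="[_]"] q[rule_format] p[rule_format])
next
  case (Cp e as)
  then obtain p where p: "\<forall>env. length env = length as \<longrightarrow> evalo orc p env (eval e env)" using Cp.IH(1)[of "length as"] Cp.prems by fastforce
  from Cp have "\<forall>a\<in>set as. \<exists>p. \<forall>env. length env = k \<longrightarrow> evalo orc p env (eval a env)"
    by (auto simp: list_all_iff)
  then obtain qs where qs: "\<forall>env. length env = k \<longrightarrow> list_all2 (\<lambda>g y. evalo orc g env y) qs (map (\<lambda>a. eval a env) as)"
    using programs_for_pexp_list by blast
  show ?case
    by (rule exI[of _ "Comp p qs"]) (auto intro!: ev_comp qs[rule_format] p[rule_format])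
next
  case (Rec n b s)
  then obtain pn pb ps where "\<forall>env. length env = k \<longrightarrow> evalo orc pn env (eval n env)"
    "\<forall>env. length env = k \<longrightarrow> evalo orc pb env (eval b env)"
    "\<forall>env. length env = Suc (Suc k) \<longrightarrow> evalo orc ps env (eval s env)" by fastforce
  then have "\<forall>env. length env = k \<longrightarrow>
      evalo orc (Comp (Prim pb ps) (pn # map Proj [0..<k])) env (eval (Rec n b s) env)"
    by (rule program_for_Rec)
  then show ?case by blast
qed

primrec lift :: "nat \<Rightarrow> pexp \<Rightarrow> pexp" where
  "lift c (V i) = (if i < c then V i else V (Suc i))"
| "lift c Z = Z"
| "lift c (S e) = S (lift c e)"
| "lift c (Fn F e) = Fn F (lift c e)"
| "lift c (Cp e as) = Cp e (map (lift c) as)"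
| "lift c (Rec n b s) = Rec (lift c n) (lift c b) (lift (Suc (Suc c)) s)"

lemma eval_lift:
  "c \<le> length env \<Longrightarrow> eval (lift c e) (take c env @ x # drop c env) = eval e env"
proof (induction e arbitrary: c env)
  case (V i) then show ?case by (auto simp: nth_append min_def)
next
  case (Cp e as) then show ?case by (auto intro!: arg_cong[where f="eval e"])
next
  case (Rec n b s)
  have "eval (lift (Suc (Suc c)) s) (i # acc # take c env @ x # drop c env) = eval s (i # acc # env)" for i acc
    using Rec.IH(3)[of "Suc (Suc c)" "i # acc # env"] Rec.prems by simp
  then show ?case using Rec by simp
qed auto

lemma eval_lift0 [simp]: "eval (lift 0 e) (x # env) = eval e env"
  using eval_lift[of 0 env e x] by simp

lemma eval_lift1 [simp]: "eval (lift (Suc 0) e) (i # x # env) = eval e (i # env)"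
  using eval_lift[of 1 "i # env" e x] by simp

lemma scoped_lift [simp]: "scoped k e \<Longrightarrow> c \<le> k \<Longrightarrow> scoped (Suc k) (lift c e)"
  by (induction e arbitrary: c k) (auto simp: list_all_iff)

lemma fns_comp_by_lift [simp]: "fns_comp_by orc (lift c e) = fns_comp_by orc e"
  by (induction e arbitrary: c) (auto simp: list_all_iff)

definition cst :: "nat \<Rightarrow> pexp" where "cst n = (S ^^ n) Z"

lemma eval_cst [simp]: "eval (cst n) env = n" by (induction n) (auto simp: cst_def)

lemma scoped_cst [simp]: "scoped k (cst n)" by (induction n) (auto simp: cst_def)

lemma fns_comp_by_cst [simp]: "fns_comp_by orc (cst n)" by (induction n) (auto simp: cst_def)

definition "PRED = Rec (V 0) Z (V 0)"
definition "ADD = Rec (V 0) (V 1) (S (V 1))"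
definition "SUB = Rec (V 1) (V 0) (Cp PRED [V 1])"
definition "MUL = Rec (V 0) Z (Cp ADD [V 1, V 3])"

lemma eval_PRED [simp]: "eval PRED [x] = x - 1"
  by (induction x) (auto simp: PRED_def)

lemma eval_ADD [simp]: "eval ADD [x, y] = x + y"
  by (induction x) (auto simp: ADD_def)

lemma eval_SUB [simp]: "eval SUB [x, y] = x - y"
  by (induction y) (auto simp: SUB_def)

lemma eval_MUL [simp]: "eval MUL [x, y] = x * y"
  by (induction x) (auto simp: MUL_def)

lemma scoped_arith_prims [simp]: "scoped (Suc 0) PRED" "scoped (Suc (Suc 0)) ADD" "scoped (Suc (Suc 0)) SUB" "scoped (Suc (Suc 0)) MUL"
  by (auto simp: PRED_def ADD_def SUB_def MUL_def)

lemma fns_comp_by_arith_prims [simp]: "fns_comp_by orc PRED" "fns_comp_by orc ADD" "fns_comp_by orc SUB" "fns_comp_by orc MUL"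
  by (auto simp: PRED_def ADD_def SUB_def MUL_def)

definition "plusx a b = Cp ADD [a, b]"
definition "minusx a b = Cp SUB [a, b]"
definition "timesx a b = Cp MUL [a, b]"
definition "sgnx a = minusx (cst 1) (minusx (cst 1) a)"
definition "notx a = minusx (cst 1) a"
definition "eqx a b = notx (plusx (minusx a b) (minusx b a))"
definition "lessx a b = sgnx (minusx b a)"
definition "andx a b = timesx (sgnx a) (sgnx b)"
definition "orx a b = sgnx (plusx a b)"
definition "ifx c a b = plusx (timesx (sgnx c) a) (timesx (notx c) b)"

lemma eval_arith [simp]:
  "eval (plusx a b) env = eval a env + eval b env"
  "eval (minusx a b) env = eval a env - eval b env"
  "eval (timesx a b) env = eval a env * eval b env"
  "eval (sgnx a) env = (if eval a env = 0 then 0 else 1)"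
  "eval (notx a) env = (if eval a env = 0 then 1 else 0)"
  "eval (eqx a b) env = (if eval a env = eval b env then 1 else 0)"
  "eval (lessx a b) env = (if eval a env < eval b env then 1 else 0)"
  "eval (andx a b) env = (if eval a env \<noteq> 0 \<and> eval b env \<noteq> 0 then 1 else 0)"
  "eval (orx a b) env = (if eval a env \<noteq> 0 \<or> eval b env \<noteq> 0 then 1 else 0)"
  "eval (ifx c a b) env = (if eval c env \<noteq> 0 then eval a env else eval b env)"
  by (auto simp: plusx_def minusx_def timesx_def sgnx_def notx_def eqx_def lessx_def andx_def orx_def ifx_def)

lemma scoped_arith [simp]:
  "scoped k (plusx a b) = (scoped k a \<and> scoped k b)"
  "scoped k (minusx a b) = (scoped k a \<and> scoped k b)"
  "scoped k (timesx a b) = (scoped k a \<and> scoped k b)"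
  "scoped k (sgnx a) = scoped k a"
  "scoped k (notx a) = scoped k a"
  "scoped k (eqx a b) = (scoped k a \<and> scoped k b)"
  "scoped k (lessx a b) = (scoped k a \<and> scoped k b)"
  "scoped k (andx a b) = (scoped k a \<and> scoped k b)"
  "scoped k (orx a b) = (scoped k a \<and> scoped k b)"
  "scoped k (ifx c a b) = (scoped k c \<and> scoped k a \<and> scoped k b)"
  by (auto simp: plusx_def minusx_def timesx_def sgnx_def notx_def eqx_def lessx_def andx_def orx_def ifx_def)

lemma fns_comp_by_arith [simp]:
  "fns_comp_by orc (plusx a b) = (fns_comp_by orc a \<and> fns_comp_by orc b)"
  "fns_comp_by orc (minusx a b) = (fns_comp_by orc a \<and> fns_comp_by orc b)"
  "fns_comp_by orc (timesx a b) = (fns_comp_by orc a \<and> fns_comp_by orc b)"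
  "fns_comp_by orc (sgnx a) = fns_comp_by orc a"
  "fns_comp_by orc (notx a) = fns_comp_by orc a"
  "fns_comp_by orc (eqx a b) = (fns_comp_by orc a \<and> fns_comp_by orc b)"
  "fns_comp_by orc (lessx a b) = (fns_comp_by orc a \<and> fns_comp_by orc b)"
  "fns_comp_by orc (andx a b) = (fns_comp_by orc a \<and> fns_comp_by orc b)"
  "fns_comp_by orc (orx a b) = (fns_comp_by orc a \<and> fns_comp_by orc b)"
  "fns_comp_by orc (ifx c a b) = (fns_comp_by orc c \<and> fns_comp_by orc a \<and> fns_comp_by orc b)"
  by (auto simp: plusx_def minusx_def timesx_def sgnx_def notx_def eqx_def lessx_def andx_def orx_def ifx_def)

definition "bexx n body = Rec n Z (orx (V 1) (lift (Suc 0) body))"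
definition "ballx n body = notx (bexx n (notx body))"
definition "leastx n body = Rec n Z (ifx (lessx (V 1) (V 0)) (V 1) (ifx (lift (Suc 0) body) (V 0) (S (V 0))))"

lemma rec_nat_bex: "rec_nat 0 (\<lambda>i acc. if acc \<noteq> 0 \<or> P i then 1 else 0) m = (if \<exists>i<m. P i then 1 else 0)"
  by (induction m) (auto simp: less_Suc_eq)

lemma eval_bexx [simp]:
  "eval (bexx n body) env = (if \<exists>i<eval n env. eval body (i # env) \<noteq> 0 then 1 else 0)"
proof -
  have st: "(\<lambda>i acc. eval (orx (V 1) (lift (Suc 0) body)) (i # acc # env))
     = (\<lambda>i acc. if acc \<noteq> 0 \<or> eval body (i # env) \<noteq> 0 then 1 else 0)"
    by (intro ext) simp
  show ?thesis unfolding bexx_def eval.simps(6) eval.simps(2) st by (rule rec_nat_bex)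
qed

lemma eval_ballx [simp]:
  "eval (ballx n body) env = (if \<forall>i<eval n env. eval body (i # env) \<noteq> 0 then 1 else 0)"
  by (auto simp: ballx_def)

lemma rec_nat_least: "rec_nat 0 (\<lambda>i acc. if acc < i then acc else if P i then i else Suc i) m
   = (if \<exists>i<m. P i then (LEAST i. P i) else m)"
proof (induction m)
  case 0 then show ?case by simp
next
  case (Suc m)
  show ?case
  proof (cases "\<exists>i<m. P i")
    case True
    then have "(LEAST i. P i) < m" by (meson LeastI_ex Least_le order_le_less_trans)
    with True Suc.IH show ?thesis by (auto simp: less_Suc_eq)
  next
    case False
    then have none_below: "\<And>i. i < m \<Longrightarrow> \<not> P i" by auto
    show ?thesis
    proof (cases "P m")
      case True
      then have "(LEAST i. P i) = m"
        by (metis (mono_tags, lifting) Least_equality none_below not_le_imp_less)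
      with True none_below Suc.IH show ?thesis by (auto simp: less_Suc_eq)
    next
      case False
      with none_below Suc.IH show ?thesis by (auto simp: less_Suc_eq)
    qed
  qed
qed

lemma eval_leastx [simp]:
  "eval (leastx n body) env = (if \<exists>i<eval n env. eval body (i # env) \<noteq> 0
     then (LEAST i. eval body (i # env) \<noteq> 0) else eval n env)"
proof -
  have st: "(\<lambda>i acc. eval (ifx (lessx (V 1) (V 0)) (V 1) (ifx (lift (Suc 0) body) (V 0) (S (V 0)))) (i # acc # env))
     = (\<lambda>i acc. if acc < i then acc else if eval body (i # env) \<noteq> 0 then i else Suc i)"
    by (intro ext) simp
  show ?thesis unfolding leastx_def eval.simps(6) eval.simps(2) st by (rule rec_nat_least)
qed

lemma scoped_bounded [simp]:
  "scoped k n \<Longrightarrow> scoped (Suc k) b \<Longrightarrow> scoped k (bexx n b)"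
  "scoped k n \<Longrightarrow> scoped (Suc k) b \<Longrightarrow> scoped k (ballx n b)"
  "scoped k n \<Longrightarrow> scoped (Suc k) b \<Longrightarrow> scoped k (leastx n b)"
  by (auto simp: bexx_def ballx_def leastx_def)

lemma fns_comp_by_bounded [simp]:
  "fns_comp_by orc (bexx n b) = (fns_comp_by orc n \<and> fns_comp_by orc b)"
  "fns_comp_by orc (ballx n b) = (fns_comp_by orc n \<and> fns_comp_by orc b)"
  "fns_comp_by orc (leastx n b) = (fns_comp_by orc n \<and> fns_comp_by orc b)"
  by (auto simp: bexx_def ballx_def leastx_def)

definition holds :: "pexp \<Rightarrow> nat list \<Rightarrow> bool" where "holds e env \<longleftrightarrow> eval e env \<noteq> 0"

lemma holds_simps [simp]:
  "holds (eqx a b) env \<longleftrightarrow> eval a env = eval b env"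
  "holds (lessx a b) env \<longleftrightarrow> eval a env < eval b env"
  "holds (andx a b) env \<longleftrightarrow> holds a env \<and> holds b env"
  "holds (orx a b) env \<longleftrightarrow> holds a env \<or> holds b env"
  "holds (notx a) env \<longleftrightarrow> \<not> holds a env"
  "holds (bexx n b) env \<longleftrightarrow> (\<exists>i<eval n env. holds b (i # env))"
  "holds (ballx n b) env \<longleftrightarrow> (\<forall>i<eval n env. holds b (i # env))"
  "holds (Cp e as) env \<longleftrightarrow> holds e (map (\<lambda>a. eval a env) as)"
  "holds (Fn F e) env \<longleftrightarrow> F (eval e env) \<noteq> 0"
  by (auto simp: holds_def)

lemma holds_lift0 [simp]: "holds (lift 0 e) (x # env) \<longleftrightarrow> holds e env"
  by (simp add: holds_def)

lemma eval_notx_eq_0: "eval (notx e) env = 0 \<longleftrightarrow> holds e env"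
  by (simp add: holds_def)

lemma comp_by_pexp:
  assumes "scoped (Suc 0) e" "fns_comp_by orc e" "\<And>x. eval e [x] = f x"
  shows "comp_by orc f"
proof -
  obtain p where "\<forall>env. length env = Suc 0 \<longrightarrow> evalo orc p env (eval e env)"
    using program_for_pexp assms(1,2) by blast
  then have "evalo orc p [x] (f x)" for x using assms(3) by (metis length_Cons list.size(3))
  then show ?thesis unfolding comp_by_def by blast
qed

lemma evalo_Mu_iff:
  assumes p: "\<forall>env. length env = Suc k \<longrightarrow> evalo orc p env (eval e env)" and "length env = k"
  shows "evalo orc (Mu p) env n \<longleftrightarrow> eval e (n # env) = 0 \<and> (\<forall>m<n. eval e (m # env) \<noteq> 0)"
proof -
  have p_env: "evalo orc p (m # env) v \<longleftrightarrow> v = eval e (m # env)" for m v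
    using p \<open>length env = k\<close> evalo_deterministic by fastforce
  show ?thesis
  proof
    assume "evalo orc (Mu p) env n"
    then show "eval e (n # env) = 0 \<and> (\<forall>m<n. eval e (m # env) \<noteq> 0)"
      by (rule muE) (auto simp: p_env)
  next
    assume least: "eval e (n # env) = 0 \<and> (\<forall>m<n. eval e (m # env) \<noteq> 0)"
    show "evalo orc (Mu p) env n"
    proof (rule ev_mu)
      show "evalo orc p (n # env) 0" using least by (simp add: p_env)
      show "\<forall>m<n. \<exists>v. evalo orc p (m # env) (Suc v)"
      proof (intro allI impI)
        fix m assume "m < n"
        then obtain v where "eval e (m # env) = Suc v" using least not0_implies_Suc by blast
        then show "\<exists>v. evalo orc p (m # env) (Suc v)" by (auto simp: p_env)
      qed
    qed
  qed
qed

lemma evalo_Mu_Least: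
  assumes "\<forall>env. length env = Suc k \<longrightarrow> evalo orc p env (eval e env)" "length env = k"
    and "\<exists>w. eval e (w # env) = 0"
  shows "evalo orc (Mu p) env (LEAST w. eval e (w # env) = 0)"
proof -
  have "eval e ((LEAST w. eval e (w # env) = 0) # env) = 0" using assms(3) by (rule LeastI_ex)
  moreover have "\<forall>m<(LEAST w. eval e (w # env) = 0). eval e (m # env) \<noteq> 0"
    using not_less_Least by blast
  ultimately show ?thesis using evalo_Mu_iff[OF assms(1,2)] by blast
qed

lemma comp_by_Least:
  assumes "scoped (Suc (Suc 0)) e" "fns_comp_by orc e" "\<And>x. \<exists>w. holds e [w, x]"
  shows "comp_by orc (\<lambda>x. LEAST w. holds e [w, x])"
proof -
  obtain p where p: "\<forall>env. length env = Suc (Suc 0) \<longrightarrow> evalo orc p env (eval (notx e) env)"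
    using program_for_pexp[of "Suc (Suc 0)" "notx e" orc] assms(1,2) by auto
  have "evalo orc (Mu p) [x] (LEAST w. eval (notx e) [w, x] = 0)" for x
    by (rule evalo_Mu_Least[OF p]) (simp, simp only: eval_notx_eq_0 assms(3))
  then show ?thesis unfolding comp_by_def eval_notx_eq_0 by blast
qed

lemma comp_by_guarded_Least:
  assumes "scoped (Suc 0) guard" "fns_comp_by orc guard"
    and "scoped (Suc (Suc 0)) test" "fns_comp_by orc test"
    and "scoped (Suc (Suc 0)) out" "fns_comp_by orc out"
    and witness: "\<And>x. holds guard [x] \<Longrightarrow> \<exists>w. holds test [w, x]"
  shows "comp_by orc (\<lambda>x. if holds guard [x] then eval out [LEAST w. holds test [w, x], x] else 0)"
proof -
  let ?search = "orx (notx (lift 0 guard)) test"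
  let ?least = "\<lambda>x. LEAST w. holds ?search [w, x]"
  let ?e = "ifx guard (Cp out [Fn ?least (V 0), V 0]) Z"
  have "\<exists>w. holds ?search [w, x]" for x
    using witness[of x] by (cases "holds guard [x]") auto
  then have "comp_by orc ?least"
    using assms(1-4) by (intro comp_by_Least) simp_all
  moreover have "eval ?e [x] = (if holds guard [x] then eval out [LEAST w. holds test [w, x], x] else 0)" for x
    by (simp add: holds_def[of guard])
  ultimately show ?thesis
    using assms(1,2,5,6) by (intro comp_by_pexp[where e = ?e]) simp_all
qed

section \<open>Codes of pairs and lists\<close>

text \<open>Lists are coded by \<open>list_encode\<close>, so \<open>cons_code x L = Suc \<langle>x, L\<rangle>\<close>; the decoding
  operations are total and return junk on the code \<open>0\<close> of the empty list.\<close>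

definition pfst :: "nat \<Rightarrow> nat" where "pfst n = fst (prod_decode n)"
definition psnd :: "nat \<Rightarrow> nat" where "psnd n = snd (prod_decode n)"
definition hd_code :: "nat \<Rightarrow> nat" where "hd_code L = pfst (L - 1)"
definition tl_code :: "nat \<Rightarrow> nat" where "tl_code L = psnd (L - 1)"
definition cons_code :: "nat \<Rightarrow> nat \<Rightarrow> nat" where "cons_code x L = Suc (prod_encode (x, L))"
definition nth_code :: "nat \<Rightarrow> nat \<Rightarrow> nat" where "nth_code i L = hd_code ((tl_code ^^ i) L)"
definition length_code :: "nat \<Rightarrow> nat" where "length_code L = length (list_decode L)"

lemma pfst_prod_encode [simp]: "pfst (prod_encode (a, b)) = a" by (simp add: pfst_def)

lemma psnd_prod_encode [simp]: "psnd (prod_encode (a, b)) = b" by (simp add: psnd_def)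

lemma prod_encode_pfst_psnd: "prod_encode (pfst n, psnd n) = n" by (simp add: pfst_def psnd_def)

lemma pfst_le: "pfst n \<le> n" by (metis le_prod_encode_1 prod_encode_pfst_psnd)

lemma psnd_le: "psnd n \<le> n" by (metis le_prod_encode_2 prod_encode_pfst_psnd)

lemma cons_code_list_encode [simp]: "cons_code x (list_encode xs) = list_encode (x # xs)" by (simp add: cons_code_def)

lemma hd_code_list_encode [simp]: "hd_code (list_encode (x # xs)) = x" by (simp add: hd_code_def)

lemma tl_code_list_encode_Cons [simp]: "tl_code (list_encode (x # xs)) = list_encode xs" by (simp add: tl_code_def)

lemma tl_code_list_encode_Nil: "tl_code (list_encode []) = list_encode []"
  by (simp add: tl_code_def psnd_def prod_decode_def prod_decode_aux.simps)

lemma tl_code_list_encode: "tl_code (list_encode xs) = list_encode (tl xs)"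
  using tl_code_list_encode_Nil by (cases xs) (auto simp: tl_code_def)

lemma funpow_tl_code_list_encode: "(tl_code ^^ i) (list_encode xs) = list_encode (drop i xs)"
proof (induction i arbitrary: xs)
  case 0 then show ?case by simp
next
  case (Suc i)
  have "(tl_code ^^ Suc i) (list_encode xs) = (tl_code ^^ i) (tl_code (list_encode xs))"
    by (simp only: funpow_Suc_right o_apply)
  also have "\<dots> = list_encode (drop i (tl xs))" by (simp only: tl_code_list_encode Suc.IH)
  finally show ?case by (simp add: drop_Suc)
qed

lemma nth_code_list_encode [simp]: "i < length xs \<Longrightarrow> nth_code i (list_encode xs) = xs ! i"
proof -
  assume "i < length xs"
  then have "drop i xs = xs ! i # drop (Suc i) xs" by (rule Cons_nth_drop_Suc[symmetric])
  then show ?thesis by (simp add: nth_code_def funpow_tl_code_list_encode hd_code_def)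
qed

lemma length_code_list_encode [simp]: "length_code (list_encode xs) = length xs" by (simp add: length_code_def)

lemma length_le_list_encode: "length xs \<le> list_encode xs"
  by (induction xs) (auto intro: le_trans[OF _ le_prod_encode_2])

lemma list_encode_0 [simp]: "list_encode xs = 0 \<longleftrightarrow> xs = []"
  by (cases xs) auto

definition "TRI = Rec (V 0) Z (plusx (V 1) (S (V 0)))"
definition "PAIR = plusx (Cp TRI [plusx (V 0) (V 1)]) (V 0)"
definition "PFST = leastx (S (V 0)) (bexx (S (V 1)) (eqx (Cp PAIR [V 1, V 0]) (V 2)))"
definition "PSND = leastx (S (V 0)) (bexx (S (V 1)) (eqx (Cp PAIR [V 0, V 1]) (V 2)))"

lemma eval_TRI [simp]: "eval TRI [n] = triangle n"
  by (induction n) (auto simp: TRI_def)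

lemma eval_PAIR [simp]: "eval PAIR [a, b] = prod_encode (a, b)"
  by (simp add: PAIR_def prod_encode_def)

lemma eval_leastx_iff:
  "eval n env = N \<Longrightarrow> (\<And>i. eval body (i # env) \<noteq> 0 \<longleftrightarrow> P i) \<Longrightarrow>
   eval (leastx n body) env = (if \<exists>i<N. P i then (LEAST i. P i) else N)"
  by auto

lemma eval_bexx_iff:
  "eval n env = N \<Longrightarrow> (\<And>i. eval body (i # env) \<noteq> 0 \<longleftrightarrow> P i) \<Longrightarrow>
   eval (bexx n body) env \<noteq> 0 \<longleftrightarrow> (\<exists>i<N. P i)"
  by auto

lemma eval_PFST [simp]: "eval PFST [n] = pfst n"
proof -
  have ex: "\<exists>a<Suc n. \<exists>b<Suc n. prod_encode (a, b) = n"
    using pfst_le psnd_le prod_encode_pfst_psnd by (metis le_imp_less_Suc)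
  have "(LEAST a. \<exists>b<Suc n. prod_encode (a, b) = n) = pfst n"
  proof (rule Least_equality)
    show "\<exists>b<Suc n. prod_encode (pfst n, b) = n" using psnd_le prod_encode_pfst_psnd by (metis le_imp_less_Suc)
  next
    fix a assume "\<exists>b<Suc n. prod_encode (a, b) = n"
    then obtain b where "prod_encode (a, b) = n" by auto
    then show "pfst n \<le> a" by (metis pfst_prod_encode order_refl)
  qed
  moreover have "eval PFST [n] = (if \<exists>a<Suc n. \<exists>b<Suc n. prod_encode (a, b) = n then (LEAST a. \<exists>b<Suc n. prod_encode (a, b) = n) else Suc n)"
    unfolding PFST_def by (rule eval_leastx_iff, simp, rule eval_bexx_iff) simp_all
  ultimately show ?thesis using ex by presburger
qed

lemma eval_PSND [simp]: "eval PSND [n] = psnd n"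
proof -
  have ex: "\<exists>b<Suc n. \<exists>a<Suc n. prod_encode (a, b) = n"
    using pfst_le psnd_le prod_encode_pfst_psnd by (metis le_imp_less_Suc)
  have "(LEAST b. \<exists>a<Suc n. prod_encode (a, b) = n) = psnd n"
  proof (rule Least_equality)
    show "\<exists>a<Suc n. prod_encode (a, psnd n) = n" using pfst_le prod_encode_pfst_psnd by (metis le_imp_less_Suc)
  next
    fix b assume "\<exists>a<Suc n. prod_encode (a, b) = n"
    then obtain a where "prod_encode (a, b) = n" by auto
    then show "psnd n \<le> b" by (metis psnd_prod_encode order_refl)
  qed
  moreover have "eval PSND [n] = (if \<exists>b<Suc n. \<exists>a<Suc n. prod_encode (a, b) = n then (LEAST b. \<exists>a<Suc n. prod_encode (a, b) = n) else Suc n)"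
    unfolding PSND_def by (rule eval_leastx_iff, simp, rule eval_bexx_iff) simp_all
  ultimately show ?thesis using ex by presburger
qed

lemma scoped_code_prims [simp]: "scoped (Suc 0) TRI" "scoped (Suc (Suc 0)) PAIR" "scoped (Suc 0) PFST" "scoped (Suc 0) PSND"
  by (auto simp: TRI_def PAIR_def PFST_def PSND_def)

lemma fns_comp_by_code_prims [simp]: "fns_comp_by orc TRI" "fns_comp_by orc PAIR" "fns_comp_by orc PFST" "fns_comp_by orc PSND"
  by (auto simp: TRI_def PAIR_def PFST_def PSND_def)

definition "pairx a b = Cp PAIR [a, b]"
definition "pfstx a = Cp PFST [a]"
definition "psndx a = Cp PSND [a]"
definition "hdx L = pfstx (minusx L (cst 1))"
definition "tlx L = psndx (minusx L (cst 1))"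
definition "consx x L = S (pairx x L)"
definition "TLS = Rec (V 0) (V 1) (tlx (V 1))"
definition "tlsx i L = Cp TLS [i, L]"
definition "nthx i L = hdx (tlsx i L)"
definition "LEN = leastx (S (V 0)) (eqx (tlsx (V 0) (V 1)) Z)"
definition "lengthx L = Cp LEN [L]"

lemma eval_TLS: "eval TLS [i, L] = (tl_code ^^ i) L"
  by (induction i) (auto simp: TLS_def tlx_def psndx_def tl_code_def)

lemma eval_LEN: "eval LEN [L] = length_code L"
proof -
  obtain xs where L: "L = list_encode xs" by (metis list_decode_inverse)
  have "\<exists>i<Suc L. (tl_code ^^ i) L = 0" using L length_le_list_encode[of xs]
    by (intro exI[of _ "length xs"]) (auto simp: funpow_tl_code_list_encode)
  moreover have "(LEAST i. (tl_code ^^ i) L = 0) = length xs"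
    by (rule Least_equality) (auto simp: L funpow_tl_code_list_encode)
  moreover have "eval LEN [L] = (if \<exists>i<Suc L. (tl_code ^^ i) L = 0 then (LEAST i. (tl_code ^^ i) L = 0) else Suc L)"
    unfolding LEN_def tlsx_def by (rule eval_leastx_iff) (simp_all add: eval_TLS)
  ultimately show ?thesis by (simp add: length_code_def L)
qed

lemma eval_code_ops [simp]:
  "eval (pairx a b) env = prod_encode (eval a env, eval b env)"
  "eval (pfstx a) env = pfst (eval a env)"
  "eval (psndx a) env = psnd (eval a env)"
  "eval (hdx a) env = hd_code (eval a env)"
  "eval (tlx a) env = tl_code (eval a env)"
  "eval (consx a b) env = cons_code (eval a env) (eval b env)"
  "eval (nthx a b) env = nth_code (eval a env) (eval b env)"
  "eval (lengthx a) env = length_code (eval a env)"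
  by (auto simp: pairx_def pfstx_def psndx_def hdx_def tlx_def consx_def nthx_def lengthx_def
      hd_code_def tl_code_def cons_code_def nth_code_def tlsx_def eval_TLS eval_LEN)

lemma scoped_TLS_LEN [simp]: "scoped (Suc (Suc 0)) TLS" "scoped (Suc 0) LEN"
  by (auto simp: TLS_def tlx_def psndx_def LEN_def tlsx_def)

lemma fns_comp_by_TLS_LEN [simp]: "fns_comp_by orc TLS" "fns_comp_by orc LEN"
  by (auto simp: TLS_def tlx_def psndx_def LEN_def tlsx_def)

lemma scoped_code_ops [simp]:
  "scoped k (pairx a b) = (scoped k a \<and> scoped k b)"
  "scoped k (pfstx a) = scoped k a"
  "scoped k (psndx a) = scoped k a"
  "scoped k (hdx a) = scoped k a"
  "scoped k (tlx a) = scoped k a"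
  "scoped k (consx a b) = (scoped k a \<and> scoped k b)"
  "scoped k (nthx a b) = (scoped k a \<and> scoped k b)"
  "scoped k (lengthx a) = scoped k a"
  by (auto simp: pairx_def pfstx_def psndx_def hdx_def tlx_def consx_def nthx_def lengthx_def tlsx_def)

lemma fns_comp_by_code_ops [simp]:
  "fns_comp_by orc (pairx a b) = (fns_comp_by orc a \<and> fns_comp_by orc b)"
  "fns_comp_by orc (pfstx a) = fns_comp_by orc a"
  "fns_comp_by orc (psndx a) = fns_comp_by orc a"
  "fns_comp_by orc (hdx a) = fns_comp_by orc a"
  "fns_comp_by orc (tlx a) = fns_comp_by orc a"
  "fns_comp_by orc (consx a b) = (fns_comp_by orc a \<and> fns_comp_by orc b)"
  "fns_comp_by orc (nthx a b) = (fns_comp_by orc a \<and> fns_comp_by orc b)"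
  "fns_comp_by orc (lengthx a) = fns_comp_by orc a"
  by (auto simp: pairx_def pfstx_def psndx_def hdx_def tlx_def consx_def nthx_def lengthx_def tlsx_def)

lemma hd_code_Suc [simp]: "hd_code (Suc (prod_encode (x, L))) = x" by (simp add: hd_code_def)

lemma tl_code_Suc [simp]: "tl_code (Suc (prod_encode (x, L))) = L" by (simp add: tl_code_def)

definition "CONST_PROG = Rec (V 0) (cst (enc Zero)) (pairx (cst 4) (pairx (cst (enc Succ)) (consx (V 1) Z)))"

lemma eval_CONST_PROG [simp]: "eval CONST_PROG [v] = enc (const_prog v)"
  by (induction v) (simp_all add: CONST_PROG_def cons_code_def)

lemma scoped_CONST_PROG [simp]: "scoped (Suc 0) CONST_PROG" by (simp add: CONST_PROG_def)

lemma fns_comp_by_CONST_PROG [simp]: "fns_comp_by orc CONST_PROG" by (simp add: CONST_PROG_def)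

section \<open>Derivations of oracle computations\<close>

text \<open>A derivation relative to an oracle graph \<open>Q\<close> is a list of entries, each justified by
  earlier ones: \<open>prog_entry c\<close> asserts that \<open>c\<close> codes a program, \<open>run_entry c a z\<close> that this
  program returns \<open>z\<close> on the argument list coded by \<open>a\<close>. Justifications only quantify over
  earlier entries, so they can be decided by expressions (next section).\<close>

definition run_entry :: "nat \<Rightarrow> nat \<Rightarrow> nat \<Rightarrow> nat" where
  "run_entry c a z = prod_encode (0, prod_encode (c, prod_encode (a, z)))"

definition prog_entry :: "nat \<Rightarrow> nat" where "prog_entry c = prod_encode (1, c)"
definition entry_prog :: "nat \<Rightarrow> nat" where "entry_prog y = pfst (psnd y)"
definition entry_args :: "nat \<Rightarrow> nat" where "entry_args y = pfst (psnd (psnd y))"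
definition entry_val :: "nat \<Rightarrow> nat" where "entry_val y = psnd (psnd (psnd y))"

lemma entry_simps [simp]:
  "pfst (run_entry c a z) = 0" "entry_prog (run_entry c a z) = c" "entry_args (run_entry c a z) = a" "entry_val (run_entry c a z) = z"
  "pfst (prog_entry c) = 1" "psnd (prog_entry c) = c"
  "run_entry c a z = run_entry c' a' z' \<longleftrightarrow> c = c' \<and> a = a' \<and> z = z'"
  "prog_entry c = prog_entry c' \<longleftrightarrow> c = c'" "run_entry c a z \<noteq> prog_entry c'" "prog_entry c' \<noteq> run_entry c a z"
  by (auto simp: run_entry_def prog_entry_def entry_prog_def entry_args_def entry_val_def)

definition prog_justified :: "nat set \<Rightarrow> nat \<Rightarrow> bool" where
  "prog_justified M c \<longleftrightarrow> c = prod_encode (0, 0) \<or> c = prod_encode (1, 0) \<or> c = prod_encode (3, 0) \<or> pfst c = 2 \<or>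
    (pfst c = 4 \<and> prog_entry (pfst (psnd c)) \<in> M \<and> (\<forall>i<length_code (psnd (psnd c)). prog_entry (nth_code i (psnd (psnd c))) \<in> M)) \<or>
    (pfst c = 5 \<and> prog_entry (pfst (psnd c)) \<in> M \<and> prog_entry (psnd (psnd c)) \<in> M) \<or>
    (pfst c = 6 \<and> prog_entry (psnd c) \<in> M)"

definition run_justified :: "(nat \<Rightarrow> nat \<Rightarrow> bool) \<Rightarrow> nat set \<Rightarrow> nat \<Rightarrow> nat \<Rightarrow> nat \<Rightarrow> bool" where
  "run_justified Q M c a z \<longleftrightarrow> prog_entry c \<in> M \<and> (
    (c = prod_encode (0, 0) \<and> z = 0) \<or>
    (c = prod_encode (1, 0) \<and> a \<noteq> 0 \<and> z = Suc (hd_code a)) \<or>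
    (pfst c = 2 \<and> psnd c < length_code a \<and> z = nth_code (psnd c) a) \<or>
    (c = prod_encode (3, 0) \<and> a \<noteq> 0 \<and> Q (hd_code a) z) \<or>
    (pfst c = 4 \<and> (\<exists>y\<in>M. pfst y = 0 \<and> entry_prog y = pfst (psnd c) \<and> entry_val y = z \<and> length_code (entry_args y) = length_code (psnd (psnd c)) \<and>
        (\<forall>i<length_code (psnd (psnd c)). run_entry (nth_code i (psnd (psnd c))) a (nth_code i (entry_args y)) \<in> M))) \<or>
    (pfst c = 5 \<and> a \<noteq> 0 \<and> ((hd_code a = 0 \<and> run_entry (pfst (psnd c)) (tl_code a) z \<in> M) \<or>
        (hd_code a \<noteq> 0 \<and> (\<exists>y\<in>M. pfst y = 0 \<and> entry_prog y = c \<and> entry_args y = cons_code (hd_code a - 1) (tl_code a) \<and>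
             run_entry (psnd (psnd c)) (cons_code (hd_code a - 1) (cons_code (entry_val y) (tl_code a))) z \<in> M)))) \<or>
    (pfst c = 6 \<and> run_entry (psnd c) (cons_code z a) 0 \<in> M \<and>
        (\<forall>m<z. \<exists>y\<in>M. pfst y = 0 \<and> entry_prog y = psnd c \<and> entry_args y = cons_code m a \<and> entry_val y \<noteq> 0)))"

definition justified :: "(nat \<Rightarrow> nat \<Rightarrow> bool) \<Rightarrow> nat set \<Rightarrow> nat \<Rightarrow> bool" where
  "justified Q M y \<longleftrightarrow> (pfst y = 1 \<and> prog_justified M (psnd y)) \<or> (pfst y = 0 \<and> run_justified Q M (entry_prog y) (entry_args y) (entry_val y))"

definition derivation :: "(nat \<Rightarrow> nat \<Rightarrow> bool) \<Rightarrow> nat list \<Rightarrow> bool" where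
  "derivation Q Ds \<longleftrightarrow> (\<forall>j<length Ds. justified Q (set (take j Ds)) (Ds ! j))"

definition sound_entry :: "(nat \<Rightarrow> nat) \<Rightarrow> nat \<Rightarrow> bool" where
  "sound_entry orc y \<longleftrightarrow> (pfst y = 1 \<longrightarrow> (\<exists>p. enc p = psnd y)) \<and>
     (pfst y = 0 \<longrightarrow> (\<exists>p. enc p = entry_prog y) \<and> (\<forall>p. enc p = entry_prog y \<longrightarrow> evalo orc p (list_decode (entry_args y)) (entry_val y)))"

definition derivable :: "(nat \<Rightarrow> nat \<Rightarrow> bool) \<Rightarrow> nat \<Rightarrow> bool" where
  "derivable Q y \<longleftrightarrow> (\<exists>Ds. derivation Q Ds \<and> y \<in> set Ds)"

abbreviation oracle_graph :: "(nat \<Rightarrow> nat) \<Rightarrow> nat \<Rightarrow> nat \<Rightarrow> bool" where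
  "oracle_graph orc \<equiv> \<lambda>x z. z = orc x"

lemma enc_Comp_inv: "enc p = c \<Longrightarrow> pfst c = 4 \<Longrightarrow>
   \<exists>f gs. p = Comp f gs \<and> enc f = pfst (psnd c) \<and> psnd (psnd c) = list_encode (map enc gs)"
  by (cases p) auto

lemma enc_Prim_inv: "enc p = c \<Longrightarrow> pfst c = 5 \<Longrightarrow>
   \<exists>f g. p = Prim f g \<and> enc f = pfst (psnd c) \<and> enc g = psnd (psnd c)"
  by (cases p) auto

lemma enc_Mu_inv: "enc p = c \<Longrightarrow> pfst c = 6 \<Longrightarrow> \<exists>f. p = Mu f \<and> enc f = psnd c"
  by (cases p) auto

lemma enc_Proj_inv: "enc p = c \<Longrightarrow> pfst c = 2 \<Longrightarrow> p = Proj (psnd c)"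
  by (cases p) auto

lemma enc_Zero_inv: "enc p = prod_encode (0, 0) \<Longrightarrow> p = Zero"
  by (cases p) auto

lemma enc_Succ_inv: "enc p = prod_encode (1, 0) \<Longrightarrow> p = Succ"
  by (cases p) auto

lemma enc_Oracle_inv: "enc p = prod_encode (3, 0) \<Longrightarrow> p = Oracle"
  by (cases p) auto

lemma list_decode_nonempty: "a \<noteq> 0 \<Longrightarrow> list_decode a = hd_code a # list_decode (tl_code a)"
  by (metis hd_code_list_encode list.exhaust list_decode_inverse list_encode_0 tl_code_list_encode_Cons list_encode_inverse)

lemma pair_split: "c = prod_encode (pfst c, prod_encode (pfst (psnd c), psnd (psnd c)))"
  by (simp add: prod_encode_pfst_psnd)

lemma sound_entry_evalo:
  "\<forall>y\<in>M. sound_entry orc y \<Longrightarrow> y \<in> M \<Longrightarrow> pfst y = 0 \<Longrightarrow> enc q = entry_prog y \<Longrightarrow>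
   evalo orc q (list_decode (entry_args y)) (entry_val y)"
  by (simp add: sound_entry_def)

lemma prog_justified_sound:
  assumes sound: "\<forall>y\<in>M. sound_entry orc y" and c: "prog_justified M c"
  shows "\<exists>p. enc p = c"
proof -
  have prog: "prog_entry d \<in> M \<Longrightarrow> \<exists>p. enc p = d" for d
    using sound by (fastforce simp: sound_entry_def)
  from c show ?thesis unfolding prog_justified_def
  proof (elim disjE conjE)
    assume "c = prod_encode (0, 0)" then show ?thesis by (intro exI[of _ Zero]) simp
  next
    assume "c = prod_encode (1, 0)" then show ?thesis by (intro exI[of _ Succ]) simp
  next
    assume "c = prod_encode (3, 0)" then show ?thesis by (intro exI[of _ Oracle]) simp
  next
    assume "pfst c = 2" then show ?thesis
      by (intro exI[of _ "Proj (psnd c)"]) (simp, metis prod_encode_pfst_psnd)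
  next
    assume "pfst c = 4" "prog_entry (pfst (psnd c)) \<in> M"
      and args: "\<forall>i<length_code (psnd (psnd c)). prog_entry (nth_code i (psnd (psnd c))) \<in> M"
    obtain xs where G: "psnd (psnd c) = list_encode xs" by (metis list_decode_inverse)
    obtain f where "enc f = pfst (psnd c)" using prog \<open>prog_entry (pfst (psnd c)) \<in> M\<close> by blast
    moreover have "\<forall>d\<in>set xs. \<exists>p. d = enc p" using args prog by (metis G in_set_conv_nth nth_code_list_encode length_code_list_encode)
    then obtain gs where "xs = map enc gs" by (metis ex_map_conv)
    ultimately have "enc (Comp f gs) = c" using \<open>pfst c = 4\<close> pair_split[of c] G by simp
    then show ?thesis by blast
  next
    assume "pfst c = 5" "prog_entry (pfst (psnd c)) \<in> M" "prog_entry (psnd (psnd c)) \<in> M"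
    then obtain f g where "enc f = pfst (psnd c)" "enc g = psnd (psnd c)" using prog by blast
    then have "enc (Prim f g) = c" using \<open>pfst c = 5\<close> pair_split[of c] by simp
    then show ?thesis by blast
  next
    assume "pfst c = 6" "prog_entry (psnd c) \<in> M"
    then obtain f where "enc f = psnd c" using prog by blast
    then have "enc (Mu f) = c" using \<open>pfst c = 6\<close> by (simp, metis prod_encode_pfst_psnd)
    then show ?thesis by blast
  qed
qed

lemma evalo_Comp_of_sound_entries:
  assumes sound: "\<forall>y\<in>M. sound_entry orc y" and p: "enc p = c" "pfst c = 4"
    and y: "y \<in> M" "pfst y = 0" "entry_prog y = pfst (psnd c)" "entry_val y = z"
      "length_code (entry_args y) = length_code (psnd (psnd c))"
    and args: "\<forall>i<length_code (psnd (psnd c)). run_entry (nth_code i (psnd (psnd c))) a (nth_code i (entry_args y)) \<in> M"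
  shows "evalo orc p (list_decode a) z"
proof -
  obtain f gs where p_eq: "p = Comp f gs" and "enc f = pfst (psnd c)"
    and gs: "psnd (psnd c) = list_encode (map enc gs)"
    using enc_Comp_inv[OF p] by blast
  obtain ys where ys: "entry_args y = list_encode ys" by (metis list_decode_inverse)
  have "list_all2 (\<lambda>g v. evalo orc g (list_decode a) v) gs ys"
    using args y(5) sound_entry_evalo[OF sound, of "run_entry _ a _"]
    by (auto simp: gs ys list_all2_conv_all_nth)
  moreover have "evalo orc f ys z"
    using sound_entry_evalo[OF sound y(1,2)] \<open>enc f = pfst (psnd c)\<close> y(3,4) ys by auto
  ultimately show ?thesis unfolding p_eq by (rule ev_comp)
qed

lemma evalo_PrimS_of_sound_entries:
  assumes sound: "\<forall>y\<in>M. sound_entry orc y" and p: "enc p = c" "pfst c = 5"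
    and a: "a \<noteq> 0" "hd_code a \<noteq> 0"
    and y: "y \<in> M" "pfst y = 0" "entry_prog y = c" "entry_args y = cons_code (hd_code a - 1) (tl_code a)"
    and step: "run_entry (psnd (psnd c)) (cons_code (hd_code a - 1) (cons_code (entry_val y) (tl_code a))) z \<in> M"
  shows "evalo orc p (list_decode a) z"
proof -
  obtain f g where p_eq: "p = Prim f g" and g: "enc g = psnd (psnd c)"
    using enc_Prim_inv[OF p] by blast
  obtain xs where xs: "tl_code a = list_encode xs" by (metis list_decode_inverse)
  have "evalo orc p ((hd_code a - 1) # xs) (entry_val y)"
    using sound_entry_evalo[OF sound y(1,2)] p y(3,4) xs by (simp add: cons_code_list_encode)
  moreover have "evalo orc g ((hd_code a - 1) # entry_val y # xs) z"
    using sound_entry_evalo[OF sound step] g xs by (simp only: cons_code_list_encode) simp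
  ultimately have "evalo orc p (Suc (hd_code a - 1) # xs) z"
    unfolding p_eq by (rule ev_primS)
  then show ?thesis using a list_decode_nonempty[of a] xs by simp
qed

lemma evalo_Mu_of_sound_entries:
  assumes sound: "\<forall>y\<in>M. sound_entry orc y" and p: "enc p = c" "pfst c = 6"
    and zero: "run_entry (psnd c) (cons_code z a) 0 \<in> M"
    and below: "\<forall>m<z. \<exists>y\<in>M. pfst y = 0 \<and> entry_prog y = psnd c \<and> entry_args y = cons_code m a \<and> entry_val y \<noteq> 0"
  shows "evalo orc p (list_decode a) z"
proof -
  obtain f where p_eq: "p = Mu f" and f: "enc f = psnd c" using enc_Mu_inv[OF p] by blast
  obtain xs where xs: "a = list_encode xs" by (metis list_decode_inverse)
  have "evalo orc f (z # xs) 0"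
    using sound_entry_evalo[OF sound zero] f xs by (simp add: cons_code_list_encode)
  moreover have "\<exists>v. evalo orc f (m # xs) (Suc v)" if "m < z" for m
  proof -
    obtain y where y: "y \<in> M" "pfst y = 0" "entry_prog y = psnd c" "entry_args y = cons_code m a"
      and "entry_val y \<noteq> 0"
      using below \<open>m < z\<close> by blast
    moreover have "evalo orc f (m # xs) (entry_val y)"
      using sound_entry_evalo[OF sound y(1,2)] f y(3,4) xs by (simp add: cons_code_list_encode)
    ultimately show ?thesis by (metis not0_implies_Suc)
  qed
  ultimately show ?thesis unfolding p_eq xs by (simp add: ev_mu)
qed

lemma run_justified_sound:
  assumes sound: "\<forall>y\<in>M. sound_entry orc y" and graph: "\<forall>x z. Q x z \<longrightarrow> z = orc x"
    and run: "run_justified Q M c a z" and p: "enc p = c"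
  shows "evalo orc p (list_decode a) z"
  using run unfolding run_justified_def
proof (elim disjE conjE)
  assume "c = prod_encode (0, 0)" "z = 0"
  then show ?thesis using p enc_Zero_inv by (auto intro: ev_zero)
next
  assume "c = prod_encode (1, 0)" "a \<noteq> 0" "z = Suc (hd_code a)"
  then show ?thesis using p enc_Succ_inv list_decode_nonempty[of a] by (auto intro: ev_succ)
next
  assume "pfst c = 2" "psnd c < length_code a" "z = nth_code (psnd c) a"
  moreover obtain xs where "a = list_encode xs" by (metis list_decode_inverse)
  moreover have "p = Proj (psnd c)" using enc_Proj_inv[OF p] \<open>pfst c = 2\<close> by blast
  ultimately show ?thesis by (auto intro: ev_proj)
next
  assume "c = prod_encode (3, 0)" "a \<noteq> 0" "Q (hd_code a) z"
  then show ?thesis using p enc_Oracle_inv list_decode_nonempty[of a] graph by (auto intro: ev_oracle)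
next
  assume "pfst c = 4" "\<exists>y\<in>M. pfst y = 0 \<and> entry_prog y = pfst (psnd c) \<and> entry_val y = z \<and>
    length_code (entry_args y) = length_code (psnd (psnd c)) \<and>
    (\<forall>i<length_code (psnd (psnd c)). run_entry (nth_code i (psnd (psnd c))) a (nth_code i (entry_args y)) \<in> M)"
  then show ?thesis using evalo_Comp_of_sound_entries[OF sound p] by blast
next
  assume "pfst c = 5" "a \<noteq> 0" "hd_code a = 0" "run_entry (pfst (psnd c)) (tl_code a) z \<in> M"
  moreover obtain f g where "p = Prim f g" "enc f = pfst (psnd c)"
    using enc_Prim_inv[OF p \<open>pfst c = 5\<close>] by blast
  moreover have "list_decode a = 0 # list_decode (tl_code a)"
    using list_decode_nonempty[of a] \<open>a \<noteq> 0\<close> \<open>hd_code a = 0\<close> by simp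
  ultimately show ?thesis
    using sound_entry_evalo[OF sound, of "run_entry (pfst (psnd c)) (tl_code a) z" f] by (auto intro: ev_prim0)
next
  assume "pfst c = 5" "a \<noteq> 0" "hd_code a \<noteq> 0" "\<exists>y\<in>M. pfst y = 0 \<and> entry_prog y = c \<and>
    entry_args y = cons_code (hd_code a - 1) (tl_code a) \<and>
    run_entry (psnd (psnd c)) (cons_code (hd_code a - 1) (cons_code (entry_val y) (tl_code a))) z \<in> M"
  then show ?thesis using evalo_PrimS_of_sound_entries[OF sound p] by blast
next
  assume "pfst c = 6" "run_entry (psnd c) (cons_code z a) 0 \<in> M"
    "\<forall>m<z. \<exists>y\<in>M. pfst y = 0 \<and> entry_prog y = psnd c \<and> entry_args y = cons_code m a \<and> entry_val y \<noteq> 0"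
  then show ?thesis using evalo_Mu_of_sound_entries[OF sound p] by blast
qed

lemma justified_sound:
  assumes sound: "\<forall>y\<in>M. sound_entry orc y" and graph: "\<forall>x z. Q x z \<longrightarrow> z = orc x"
    and "justified Q M y"
  shows "sound_entry orc y"
  using \<open>justified Q M y\<close> unfolding justified_def
proof (elim disjE conjE)
  assume "pfst y = 1" "prog_justified M (psnd y)"
  then show ?thesis using prog_justified_sound[OF sound] by (simp add: sound_entry_def)
next
  assume run: "pfst y = 0" "run_justified Q M (entry_prog y) (entry_args y) (entry_val y)"
  then have "prog_entry (entry_prog y) \<in> M" by (simp add: run_justified_def)
  then have "\<exists>p. enc p = entry_prog y" using sound by (fastforce simp: sound_entry_def)
  then show ?thesis using run run_justified_sound[OF sound graph] by (simp add: sound_entry_def)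
qed

lemma derivation_sound:
  assumes "derivation Q Ds" and graph: "\<forall>x z. Q x z \<longrightarrow> z = orc x"
  shows "\<forall>y\<in>set Ds. sound_entry orc y"
proof -
  have "\<forall>y\<in>set (take j Ds). sound_entry orc y" for j
  proof (induction j)
    case (Suc j)
    show ?case
    proof (cases "j < length Ds")
      case True
      then have "sound_entry orc (Ds ! j)"
        using justified_sound[OF Suc.IH graph] \<open>derivation Q Ds\<close> by (simp add: derivation_def)
      then show ?thesis using Suc.IH True by (simp add: take_Suc_conv_app_nth)
    qed (use Suc.IH in simp)
  qed simp
  from this[of "length Ds"] show ?thesis by simp
qed

lemma prog_justified_mono: assumes "M \<subseteq> M'" "prog_justified M c" shows "prog_justified M' c"
proof -
  have m: "x \<in> M \<Longrightarrow> x \<in> M'" for x using assms(1) by blast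
  show ?thesis using assms(2) unfolding prog_justified_def
    by (elim disjE conjE) (simp_all add: m)
qed

lemma run_justified_mono: assumes "M \<subseteq> M'" "run_justified Q M c a z" shows "run_justified Q M' c a z"
proof -
  have m: "x \<in> M \<Longrightarrow> x \<in> M'" for x using assms(1) by blast
  show ?thesis using assms(2) unfolding run_justified_def
    apply (elim disjE conjE)
    apply (simp_all add: m)
    apply (rule disjI2, rule disjI2, rule disjI2, blast intro: m)+
    done
qed

lemma justified_mono: "M \<subseteq> M' \<Longrightarrow> justified Q M y \<Longrightarrow> justified Q M' y"
  unfolding justified_def by (metis prog_justified_mono run_justified_mono)

lemma derivation_Nil [simp]: "derivation Q []" by (simp add: derivation_def)

lemma derivation_append: "derivation Q A \<Longrightarrow> derivation Q B \<Longrightarrow> derivation Q (A @ B)"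
  unfolding derivation_def
proof (intro allI impI)
  fix j assume vA: "\<forall>j<length A. justified Q (set (take j A)) (A ! j)"
    and vB: "\<forall>j<length B. justified Q (set (take j B)) (B ! j)" and j: "j < length (A @ B)"
  show "justified Q (set (take j (A @ B))) ((A @ B) ! j)"
  proof (cases "j < length A")
    case True then show ?thesis using vA by (simp add: nth_append)
  next
    case False
    then have "justified Q (set (take (j - length A) B)) ((A @ B) ! j)"
      using vB j by (simp add: nth_append)
    moreover have "set (take (j - length A) B) \<subseteq> set (take j (A @ B))" using False by auto
    ultimately show ?thesis using justified_mono by blast
  qed
qed

lemma derivation_snoc: "derivation Q A \<Longrightarrow> justified Q (set A) y \<Longrightarrow> derivation Q (A @ [y])"
  unfolding derivation_def
proof (intro allI impI)
  fix j assume vA: "\<forall>j<length A. justified Q (set (take j A)) (A ! j)" and y: "justified Q (set A) y"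
    and j: "j < length (A @ [y])"
  show "justified Q (set (take j (A @ [y]))) ((A @ [y]) ! j)"
  proof (cases "j < length A")
    case True then show ?thesis using vA by (simp add: nth_append)
  next
    case False then have "j = length A" using j by simp
    then show ?thesis using y by simp
  qed
qed

lemma derivable_justified: "derivation Q Ds \<Longrightarrow> justified Q (set Ds) y \<Longrightarrow> derivable Q y"
  unfolding derivable_def by (intro exI[of _ "Ds @ [y]"]) (simp add: derivation_snoc)

lemma derivation_of_derivables: "\<forall>y\<in>set ys. derivable Q y \<Longrightarrow> \<exists>Ds. derivation Q Ds \<and> set ys \<subseteq> set Ds"
proof (induction ys)
  case (Cons y ys)
  then obtain Ds D where "derivation Q Ds" "set ys \<subseteq> set Ds" "derivation Q D" "y \<in> set D"
    by (auto simp: derivable_def)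
  then show ?case by (intro exI[of _ "Ds @ D"]) (auto intro: derivation_append)
qed (auto intro: exI[of _ "[]"])

lemma derivable_from:
  "\<forall>y\<in>set ys. derivable Q y \<Longrightarrow> justified Q (set ys) x \<Longrightarrow> derivable Q x"
proof -
  assume "\<forall>y\<in>set ys. derivable Q y" "justified Q (set ys) x"
  moreover obtain Ds where "derivation Q Ds" "set ys \<subseteq> set Ds"
    using derivation_of_derivables \<open>\<forall>y\<in>set ys. derivable Q y\<close> by blast
  ultimately show ?thesis using justified_mono derivable_justified by blast
qed

lemma prog_entry_derivable: "derivable Q (prog_entry (enc p))"
proof (induction p)
  case (Comp f gs)
  let ?ys = "prog_entry (enc f) # map (prog_entry \<circ> enc) gs"
  have "justified Q (set ?ys) (prog_entry (enc (Comp f gs)))"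
    by (simp add: justified_def prog_justified_def)
  then show ?case using Comp.IH by (intro derivable_from[of ?ys]) auto
next
  case (Prim f g)
  let ?ys = "[prog_entry (enc f), prog_entry (enc g)]"
  have "justified Q (set ?ys) (prog_entry (enc (Prim f g)))"
    by (simp add: justified_def prog_justified_def)
  then show ?case using Prim.IH by (intro derivable_from[of ?ys]) auto
next
  case (Mu f)
  have "justified Q (set [prog_entry (enc f)]) (prog_entry (enc (Mu f)))"
    by (simp add: justified_def prog_justified_def)
  then show ?case using Mu.IH by (intro derivable_from[of "[prog_entry (enc f)]"]) auto
qed (intro derivable_justified[of Q "[]"], simp_all add: justified_def prog_justified_def)+

lemma run_justified_Comp: "prog_entry c \<in> M \<Longrightarrow> pfst c = 4 \<Longrightarrow> y \<in> M \<Longrightarrow> pfst y = 0 \<Longrightarrow> entry_prog y = pfst (psnd c) \<Longrightarrow> entry_val y = z \<Longrightarrow>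
   length_code (entry_args y) = length_code (psnd (psnd c)) \<Longrightarrow> (\<forall>i<length_code (psnd (psnd c)). run_entry (nth_code i (psnd (psnd c))) a (nth_code i (entry_args y)) \<in> M) \<Longrightarrow>
   run_justified Q M c a z"
  unfolding run_justified_def by blast

lemma run_justified_Prim0: "prog_entry c \<in> M \<Longrightarrow> pfst c = 5 \<Longrightarrow> a \<noteq> 0 \<Longrightarrow> hd_code a = 0 \<Longrightarrow> run_entry (pfst (psnd c)) (tl_code a) z \<in> M \<Longrightarrow>
   run_justified Q M c a z"
  unfolding run_justified_def by blast

lemma run_justified_PrimS: "prog_entry c \<in> M \<Longrightarrow> pfst c = 5 \<Longrightarrow> a \<noteq> 0 \<Longrightarrow> hd_code a \<noteq> 0 \<Longrightarrow> y \<in> M \<Longrightarrow> pfst y = 0 \<Longrightarrow> entry_prog y = c \<Longrightarrow>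
   entry_args y = cons_code (hd_code a - 1) (tl_code a) \<Longrightarrow> run_entry (psnd (psnd c)) (cons_code (hd_code a - 1) (cons_code (entry_val y) (tl_code a))) z \<in> M \<Longrightarrow>
   run_justified Q M c a z"
  unfolding run_justified_def by blast

lemma run_justified_Mu: "prog_entry c \<in> M \<Longrightarrow> pfst c = 6 \<Longrightarrow> run_entry (psnd c) (cons_code z a) 0 \<in> M \<Longrightarrow>
   (\<forall>m<z. \<exists>y\<in>M. pfst y = 0 \<and> entry_prog y = psnd c \<and> entry_args y = cons_code m a \<and> entry_val y \<noteq> 0) \<Longrightarrow> run_justified Q M c a z"
  unfolding run_justified_def by blast

lemma derivable_run_of_prog:
  "run_justified Q {prog_entry (enc p)} (enc p) a z \<Longrightarrow> derivable Q (run_entry (enc p) a z)"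
  using prog_entry_derivable[of Q p]
  by (intro derivable_from[of "[prog_entry (enc p)]"]) (simp_all add: justified_def)

lemma derivable_Comp_run:
  assumes args: "\<forall>i<length gs. derivable Q (run_entry (enc (gs ! i)) a (ys ! i))"
    and "length gs = length ys" and "derivable Q (run_entry (enc f) (list_encode ys) z)"
  shows "derivable Q (run_entry (enc (Comp f gs)) a z)"
proof -
  let ?args = "map (\<lambda>i. run_entry (enc (gs ! i)) a (ys ! i)) [0..<length gs]"
  let ?ys = "prog_entry (enc (Comp f gs)) # run_entry (enc f) (list_encode ys) z # ?args"
  have "run_justified Q (set ?ys) (enc (Comp f gs)) a z"
    using \<open>length gs = length ys\<close>
    by (intro run_justified_Comp[where y = "run_entry (enc f) (list_encode ys) z"]) auto
  then show ?thesis
    using assms prog_entry_derivable[of _ "Comp f gs"]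
    by (intro derivable_from[of ?ys]) (auto simp: justified_def)
qed

lemma derivable_Mu_run:
  assumes "derivable Q (run_entry (enc f) (list_encode (n # xs)) 0)"
    and "\<forall>m<n. \<exists>v. derivable Q (run_entry (enc f) (list_encode (m # xs)) (Suc v))"
  shows "derivable Q (run_entry (enc (Mu f)) (list_encode xs) n)"
proof -
  obtain v where v: "\<forall>m<n. derivable Q (run_entry (enc f) (list_encode (m # xs)) (Suc (v m)))"
    using assms(2) by metis
  let ?below = "map (\<lambda>m. run_entry (enc f) (list_encode (m # xs)) (Suc (v m))) [0..<n]"
  let ?ys = "prog_entry (enc (Mu f)) # run_entry (enc f) (list_encode (n # xs)) 0 # ?below"
  have "run_justified Q (set ?ys) (enc (Mu f)) (list_encode xs) n"
    by (intro run_justified_Mu) (force simp: cons_code_def)+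
  then show ?thesis
    using assms(1) v prog_entry_derivable[of _ "Mu f"]
    by (intro derivable_from[of ?ys]) (auto simp: justified_def)
qed

lemma evalo_derivable:
  "evalo orc p xs z \<Longrightarrow> derivable (oracle_graph orc) (run_entry (enc p) (list_encode xs) z)"
proof (induction rule: evalo.induct)
  case (ev_comp xs gs ys f z)
  then show ?case
    by (intro derivable_Comp_run) (auto simp: list_all2_conv_all_nth dest: list_all2_lengthD)
next
  case (ev_prim0 f xs z g)
  let ?ys = "[prog_entry (enc (Prim f g)), run_entry (enc f) (list_encode xs) z]"
  have "run_justified (oracle_graph orc) (set ?ys) (enc (Prim f g)) (list_encode (0 # xs)) z"
    by (intro run_justified_Prim0) auto
  then show ?case using ev_prim0.IH prog_entry_derivable[of _ "Prim f g"]
    by (intro derivable_from[of ?ys]) (auto simp: justified_def)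
next
  case (ev_primS f g n xs y z)
  let ?prev = "run_entry (enc (Prim f g)) (list_encode (n # xs)) y"
  let ?ys = "[prog_entry (enc (Prim f g)), ?prev, run_entry (enc g) (list_encode (n # y # xs)) z]"
  have "run_justified (oracle_graph orc) (set ?ys) (enc (Prim f g)) (list_encode (Suc n # xs)) z"
    by (intro run_justified_PrimS[where y = ?prev]) (auto simp: cons_code_def)
  then show ?case using ev_primS.IH prog_entry_derivable[of _ "Prim f g"]
    by (intro derivable_from[of ?ys]) (auto simp: justified_def)
next
  case (ev_mu f n xs)
  then show ?case by (intro derivable_Mu_run) blast+
qed (rule derivable_run_of_prog, simp add: run_justified_def)+

definition run_witness :: "(nat \<Rightarrow> nat \<Rightarrow> bool) \<Rightarrow> nat \<Rightarrow> nat \<Rightarrow> nat \<Rightarrow> bool" where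
  "run_witness Q w c a \<longleftrightarrow> derivation Q (list_decode (pfst w)) \<and> run_entry c a (psnd w) \<in> set (list_decode (pfst w))"

lemma run_witness_sound:
  assumes "run_witness Q w c a" "\<forall>x z. Q x z \<longrightarrow> z = orc x"
  shows "(\<exists>p. enc p = c) \<and> (\<forall>p. enc p = c \<longrightarrow> evalo orc p (list_decode a) (psnd w))"
proof -
  have "sound_entry orc (run_entry c a (psnd w))" using derivation_sound[of Q _ orc] assms unfolding run_witness_def by blast
  then show ?thesis by (simp add: sound_entry_def)
qed

lemma run_witness_complete:
  assumes "evalo orc p xs z"
  shows "\<exists>w. run_witness (oracle_graph orc) w (enc p) (list_encode xs) \<and> psnd w = z"
proof -
  obtain Ds where "derivation (oracle_graph orc) Ds" "run_entry (enc p) (list_encode xs) z \<in> set Ds"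
    using evalo_derivable[OF assms] by (auto simp: derivable_def)
  then show ?thesis by (intro exI[of _ "prod_encode (list_encode Ds, z)"]) (simp add: run_witness_def)
qed

lemma mem_le_list_encode: "y \<in> set xs \<Longrightarrow> y \<le> list_encode xs"
proof (induction xs)
  case (Cons x xs)
  have "x \<le> prod_encode (x, list_encode xs)" "list_encode xs \<le> prod_encode (x, list_encode xs)"
    by (rule le_prod_encode_1, rule le_prod_encode_2)
  then show ?case using Cons by auto
qed simp

lemma hd_code_le: "hd_code a \<le> a" unfolding hd_code_def using pfst_le[of "a - 1"] by simp

lemma entry_args_le: "entry_args y \<le> y" unfolding entry_args_def using pfst_le[of "psnd (psnd y)"] psnd_le[of "psnd y"] psnd_le[of y] by simp

lemma run_justified_oracle_mono:
  assumes "run_justified Q M c a z" "\<forall>z. Q (hd_code a) z \<longrightarrow> Q' (hd_code a) z"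
  shows "run_justified Q' M c a z"
  using assms unfolding run_justified_def by (elim conjE disjE) simp_all

lemma run_witness_use:
  assumes V: "run_witness Q w c a" and QQ: "\<forall>x z. x \<le> w \<longrightarrow> Q x z \<longrightarrow> Q' x z"
  shows "run_witness Q' w c a"
proof -
  let ?Ds = "list_decode (pfst w)"
  have le: "y \<in> set ?Ds \<Longrightarrow> y \<le> w" for y
    using mem_le_list_encode[of y ?Ds] pfst_le[of w] by simp
  have "justified Q' (set (take j ?Ds)) (?Ds ! j)" if j: "j < length ?Ds" for j
  proof -
    have jj: "justified Q (set (take j ?Ds)) (?Ds ! j)" using V j by (simp add: run_witness_def derivation_def)
    have yw: "?Ds ! j \<le> w" using le j by simp
    have "hd_code (entry_args (?Ds ! j)) \<le> w" using hd_code_le entry_args_le yw le_trans by blast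
    then have "\<forall>z. Q (hd_code (entry_args (?Ds ! j))) z \<longrightarrow> Q' (hd_code (entry_args (?Ds ! j))) z" using QQ by blast
    then show ?thesis using jj run_justified_oracle_mono unfolding justified_def by blast
  qed
  then show ?thesis using V by (simp add: run_witness_def derivation_def)
qed

section \<open>Deciding derivations\<close>

text \<open>The oracle graph is itself given by an expression \<open>oc\<close>, evaluated on \<open>[x, z, par]\<close> for a
  parameter \<open>par\<close>; the earlier entries of a coded list \<open>D\<close> form its prefix of length \<open>j\<close>.\<close>

definition in_prefix :: "nat \<Rightarrow> nat \<Rightarrow> nat \<Rightarrow> bool" where "in_prefix j D v \<longleftrightarrow> (\<exists>l<j. nth_code l D = v)"

lemma ex_in_prefix [simp]: "(\<exists>y. in_prefix j D y \<and> P y) \<longleftrightarrow> (\<exists>l<j. P (nth_code l D))"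
  by (auto simp: in_prefix_def)

lemma in_prefix_full [simp]: "in_prefix (length Ds) (list_encode Ds) v \<longleftrightarrow> v \<in> set Ds"
  by (auto simp: in_prefix_def in_set_conv_nth)

lemma in_prefix_take: "j \<le> length Ds \<Longrightarrow> {v. in_prefix j (list_encode Ds) v} = set (take j Ds)"
  by (auto simp: in_prefix_def set_conv_nth) (metis nth_take)

definition "MEMX = bexx (V 1) (eqx (nthx (V 0) (V 3)) (V 1))"

lemma holds_MEMX [simp]: "holds MEMX [v, j, D] \<longleftrightarrow> in_prefix j D v"
  by (simp add: MEMX_def in_prefix_def)

lemma scoped_MEMX [simp]: "scoped (Suc (Suc (Suc 0))) MEMX" by (simp add: MEMX_def)

lemma fns_comp_by_MEMX [simp]: "fns_comp_by orc MEMX" by (simp add: MEMX_def)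

definition "run_entryx c a z = pairx Z (pairx c (pairx a z))"
definition "entry_progx y = pfstx (psndx y)"
definition "entry_argsx y = pfstx (psndx (psndx y))"
definition "entry_valx y = psndx (psndx (psndx y))"

lemma entry_ops [simp]:
  "eval (run_entryx c a z) env = run_entry (eval c env) (eval a env) (eval z env)"
  "eval (entry_progx y) env = entry_prog (eval y env)"
  "eval (entry_argsx y) env = entry_args (eval y env)"
  "eval (entry_valx y) env = entry_val (eval y env)"
  "scoped k (run_entryx c a z) = (scoped k c \<and> scoped k a \<and> scoped k z)"
  "scoped k (entry_progx y) = scoped k y" "scoped k (entry_argsx y) = scoped k y" "scoped k (entry_valx y) = scoped k y"
  "fns_comp_by orc (run_entryx c a z) = (fns_comp_by orc c \<and> fns_comp_by orc a \<and> fns_comp_by orc z)"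
  "fns_comp_by orc (entry_progx y) = fns_comp_by orc y" "fns_comp_by orc (entry_argsx y) = fns_comp_by orc y" "fns_comp_by orc (entry_valx y) = fns_comp_by orc y"
  by (auto simp: run_entryx_def entry_progx_def entry_argsx_def entry_valx_def run_entry_def entry_prog_def entry_args_def entry_val_def)

definition "PROG_JUSTIFIED = (let mem = (\<lambda>v. Cp MEMX [v, V 1, V 2]) in
  orx (eqx (V 0) (cst (prod_encode (0, 0))))
  (orx (eqx (V 0) (cst (prod_encode (1, 0))))
  (orx (eqx (V 0) (cst (prod_encode (3, 0))))
  (orx (eqx (pfstx (V 0)) (cst 2))
  (orx (andx (eqx (pfstx (V 0)) (cst 4)) (andx (mem (pairx (cst 1) (pfstx (psndx (V 0)))))
        (ballx (lengthx (psndx (psndx (V 0)))) (Cp MEMX [pairx (cst 1) (nthx (V 0) (psndx (psndx (V 1)))), V 2, V 3]))))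
  (orx (andx (eqx (pfstx (V 0)) (cst 5)) (andx (mem (pairx (cst 1) (pfstx (psndx (V 0))))) (mem (pairx (cst 1) (psndx (psndx (V 0)))))))
       (andx (eqx (pfstx (V 0)) (cst 6)) (mem (pairx (cst 1) (psndx (V 0)))))))))))"

lemma holds_PROG_JUSTIFIED [simp]: "holds PROG_JUSTIFIED [c, j, D] \<longleftrightarrow> prog_justified {v. in_prefix j D v} c"
  unfolding PROG_JUSTIFIED_def prog_justified_def prog_entry_def by simp

definition "RUN_JUSTIFIED oc = (let mem = (\<lambda>v. Cp MEMX [v, V 3, V 4]) in
  andx (mem (pairx (cst 1) (V 0)))
  (orx (andx (eqx (V 0) (cst (prod_encode (0, 0)))) (eqx (V 2) Z))
  (orx (andx (eqx (V 0) (cst (prod_encode (1, 0)))) (andx (notx (eqx (V 1) Z)) (eqx (V 2) (S (hdx (V 1))))))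
  (orx (andx (eqx (pfstx (V 0)) (cst 2)) (andx (lessx (psndx (V 0)) (lengthx (V 1))) (eqx (V 2) (nthx (psndx (V 0)) (V 1)))))
  (orx (andx (eqx (V 0) (cst (prod_encode (3, 0)))) (andx (notx (eqx (V 1) Z)) (Cp oc [hdx (V 1), V 2, V 5])))
  (orx (andx (eqx (pfstx (V 0)) (cst 4))
         (bexx (V 3) (let y = nthx (V 0) (V 5) in
            andx (eqx (pfstx y) Z) (andx (eqx (entry_progx y) (pfstx (psndx (V 1)))) (andx (eqx (entry_valx y) (V 3))
            (andx (eqx (lengthx (entry_argsx y)) (lengthx (psndx (psndx (V 1)))))
             (ballx (lengthx (psndx (psndx (V 1))))
               (Cp MEMX [run_entryx (nthx (V 0) (psndx (psndx (V 2)))) (V 3) (nthx (V 0) (entry_argsx (nthx (V 1) (V 6)))), V 5, V 6]))))))))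
  (orx (andx (eqx (pfstx (V 0)) (cst 5)) (andx (notx (eqx (V 1) Z))
         (orx (andx (eqx (hdx (V 1)) Z) (mem (run_entryx (pfstx (psndx (V 0))) (tlx (V 1)) (V 2))))
              (andx (notx (eqx (hdx (V 1)) Z))
                (bexx (V 3) (let y = nthx (V 0) (V 5) in
                  andx (eqx (pfstx y) Z) (andx (eqx (entry_progx y) (V 1))
                  (andx (eqx (entry_argsx y) (consx (minusx (hdx (V 2)) (cst 1)) (tlx (V 2))))
                  (Cp MEMX [run_entryx (psndx (psndx (V 1))) (consx (minusx (hdx (V 2)) (cst 1)) (consx (entry_valx y) (tlx (V 2)))) (V 3), V 4, V 5])))))))))
  (andx (eqx (pfstx (V 0)) (cst 6)) (andx (mem (run_entryx (psndx (V 0)) (consx (V 2) (V 1)) Z))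
      (ballx (V 2) (bexx (V 4) (let y = nthx (V 0) (V 6) in
          andx (eqx (pfstx y) Z) (andx (eqx (entry_progx y) (psndx (V 2))) (andx (eqx (entry_argsx y) (consx (V 1) (V 3))) (notx (eqx (entry_valx y) Z))))))))))))))))"

lemma holds_RUN_JUSTIFIED [simp]: "holds (RUN_JUSTIFIED oc) [c, a, z, j, D, par] \<longleftrightarrow> run_justified (\<lambda>x z. holds oc [x, z, par]) {v. in_prefix j D v} c a z"
  unfolding RUN_JUSTIFIED_def run_justified_def prog_entry_def by (simp add: Let_def)

definition "JUSTIFIED oc = (let y = nthx (V 0) (V 1) in
  orx (andx (eqx (pfstx y) (cst 1)) (Cp PROG_JUSTIFIED [psndx y, V 0, V 1]))
      (andx (eqx (pfstx y) Z) (Cp (RUN_JUSTIFIED oc) [entry_progx y, entry_argsx y, entry_valx y, V 0, V 1, V 2])))"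

lemma holds_JUSTIFIED [simp]: "holds (JUSTIFIED oc) [j, D, par] \<longleftrightarrow> justified (\<lambda>x z. holds oc [x, z, par]) {v. in_prefix j D v} (nth_code j D)"
  unfolding JUSTIFIED_def justified_def by (simp add: Let_def)

definition "DERIVATION oc = ballx (lengthx (V 0)) (Cp (JUSTIFIED oc) [V 0, V 1, V 2])"

lemma holds_DERIVATION [simp]: "holds (DERIVATION oc) [D, par] \<longleftrightarrow> derivation (\<lambda>x z. holds oc [x, z, par]) (list_decode D)"
proof -
  obtain Ds where D: "D = list_encode Ds" by (metis list_decode_inverse)
  show ?thesis unfolding DERIVATION_def derivation_def D by (simp add: in_prefix_take)
qed

definition "RUN_WITNESS oc = andx (Cp (DERIVATION oc) [pfstx (V 0), V 3]) (Cp MEMX [run_entryx (V 1) (V 2) (psndx (V 0)), lengthx (pfstx (V 0)), pfstx (V 0)])"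

lemma holds_RUN_WITNESS [simp]: "holds (RUN_WITNESS oc) [w, c, a, par] \<longleftrightarrow> run_witness (\<lambda>x z. holds oc [x, z, par]) w c a"
proof -
  obtain Ds where D: "pfst w = list_encode Ds" by (metis list_decode_inverse)
  show ?thesis unfolding RUN_WITNESS_def run_witness_def by (simp add: D)
qed

lemma scoped_PROG_JUSTIFIED [simp]: "scoped (Suc (Suc (Suc 0))) PROG_JUSTIFIED"
  by (simp add: PROG_JUSTIFIED_def Let_def)

lemma scoped_RUN_JUSTIFIED [simp]: "scoped (Suc (Suc (Suc 0))) oc \<Longrightarrow> scoped (Suc (Suc (Suc (Suc (Suc (Suc 0)))))) (RUN_JUSTIFIED oc)"
  by (simp add: RUN_JUSTIFIED_def Let_def)

lemma scoped_JUSTIFIED [simp]: "scoped (Suc (Suc (Suc 0))) oc \<Longrightarrow> scoped (Suc (Suc (Suc 0))) (JUSTIFIED oc)"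
  by (simp add: JUSTIFIED_def Let_def)

lemma scoped_DERIVATION [simp]: "scoped (Suc (Suc (Suc 0))) oc \<Longrightarrow> scoped (Suc (Suc 0)) (DERIVATION oc)"
  by (simp add: DERIVATION_def)

lemma scoped_RUN_WITNESS [simp]: "scoped (Suc (Suc (Suc 0))) oc \<Longrightarrow> scoped (Suc (Suc (Suc (Suc 0)))) (RUN_WITNESS oc)"
  by (simp add: RUN_WITNESS_def)

lemma fns_comp_by_RUN_WITNESS [simp]: "fns_comp_by orc (RUN_WITNESS oc) = fns_comp_by orc oc"
  by (simp add: RUN_WITNESS_def DERIVATION_def JUSTIFIED_def RUN_JUSTIFIED_def PROG_JUSTIFIED_def Let_def)

section \<open>The halting set and finite oracle tables\<close>

definition zero_graph :: "nat \<Rightarrow> nat \<Rightarrow> bool" where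
  "zero_graph x z \<longleftrightarrow> z = 0"

text \<open>A table \<open>r = \<langle>u, [X(u-1), \<dots>, X(0)]\<rangle>\<close> codes the finite oracle \<open>X\<restriction>u\<close>; the list is
  reversed so that \<open>X\<restriction>(u+1)\<close> arises from \<open>X\<restriction>u\<close> by a single cons.\<close>

definition table_graph :: "nat \<Rightarrow> nat \<Rightarrow> nat \<Rightarrow> bool" where
  "table_graph r x z \<longleftrightarrow> x < pfst r \<and> z = nth_code (pfst r - Suc x) (psnd r)"

definition "ZERO_GRAPH = eqx (V 1) Z"
definition "TABLE_GRAPH = andx (lessx (V 0) (pfstx (V 2))) (eqx (V 1) (nthx (minusx (pfstx (V 2)) (S (V 0))) (psndx (V 2))))"
definition "GRAPH F = eqx (V 1) (Fn F (V 0))"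

lemma holds_graphs [simp]:
  "(\<lambda>x z. holds ZERO_GRAPH [x, z, r]) = zero_graph"
  "(\<lambda>x z. holds TABLE_GRAPH [x, z, r]) = table_graph r"
  "(\<lambda>x z. holds (GRAPH F) [x, z, r]) = oracle_graph F"
  by (auto simp: ZERO_GRAPH_def TABLE_GRAPH_def GRAPH_def zero_graph_def table_graph_def fun_eq_iff)

lemma scoped_graphs [simp]:
  "scoped (Suc (Suc (Suc 0))) ZERO_GRAPH" "scoped (Suc (Suc (Suc 0))) TABLE_GRAPH"
  "scoped (Suc (Suc (Suc 0))) (GRAPH F)"
  "fns_comp_by orc ZERO_GRAPH" "fns_comp_by orc TABLE_GRAPH" "fns_comp_by orc (GRAPH F) = comp_by orc F"
  by (auto simp: ZERO_GRAPH_def TABLE_GRAPH_def GRAPH_def)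

lemma halting_iff_run_witness: "n \<in> halting \<longleftrightarrow> (\<exists>w. run_witness zero_graph w n (list_encode [n]))"
proof
  assume "n \<in> halting"
  then obtain p v where "enc p = n" "evalo (\<lambda>_. 0) p [n] v" by (auto simp: halting_def)
  then show "\<exists>w. run_witness zero_graph w n (list_encode [n])"
    using run_witness_complete[of "\<lambda>_. 0" p "[n]" v] by (auto simp: zero_graph_def[abs_def])
next
  assume "\<exists>w. run_witness zero_graph w n (list_encode [n])"
  then obtain w where "run_witness zero_graph w n (list_encode [n])" by blast
  from run_witness_sound[OF this, of "\<lambda>_. 0"] obtain p where "enc p = n" "evalo (\<lambda>_. 0) p [n] (psnd w)"
    by (auto simp: zero_graph_def)
  then show "n \<in> halting" by (auto simp: halting_def)
qed

definition table_search :: rf where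
  "table_search = Mu (SOME p. \<forall>env. length env = Suc (Suc (Suc (Suc 0))) \<longrightarrow>
     evalo (\<lambda>_. 0) p env (eval (notx (RUN_WITNESS TABLE_GRAPH)) env))"

lemma table_search_halts:
  "(\<exists>v. evalo (\<lambda>_. 0) table_search [c, a, r] v) \<longleftrightarrow> (\<exists>w. run_witness (table_graph r) w c a)"
proof -
  let ?e = "notx (RUN_WITNESS TABLE_GRAPH)"
  define p where "p = (SOME p. \<forall>env. length env = Suc (Suc (Suc (Suc 0))) \<longrightarrow>
    evalo (\<lambda>_. 0) p env (eval ?e env))"
  have p: "\<forall>env. length env = Suc (Suc (Suc (Suc 0))) \<longrightarrow> evalo (\<lambda>_. 0) p env (eval ?e env)"
    unfolding p_def by (rule someI_ex, rule program_for_pexp) simp_all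
  have len: "length [c, a, r] = Suc (Suc (Suc 0))" by simp
  have "(\<exists>v. evalo (\<lambda>_. 0) (Mu p) [c, a, r] v) \<longleftrightarrow> (\<exists>w. eval ?e [w, c, a, r] = 0)"
    using evalo_Mu_iff[OF p len] evalo_Mu_Least[OF p len] by blast
  then show ?thesis unfolding table_search_def p_def[symmetric] eval_notx_eq_0 by simp
qed

definition table_run_index :: "nat \<Rightarrow> nat \<Rightarrow> nat \<Rightarrow> nat" where
  "table_run_index c a r = enc (Comp table_search (map const_prog [c, a, r]))"

lemma table_run_index_halting: "table_run_index c a r \<in> halting \<longleftrightarrow> (\<exists>w. run_witness (table_graph r) w c a)"
proof -
  have "table_run_index c a r \<in> halting \<longleftrightarrow>
      (\<exists>v. evalo (\<lambda>_. 0) (Comp table_search (map const_prog [c, a, r])) [table_run_index c a r] v)"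
    unfolding halting_def table_run_index_def using enc_injective by blast
  then show ?thesis by (simp only: evalo_Comp_const_progs table_search_halts)
qed

definition "TABLE_RUN_INDEX c a r = pairx (cst 4) (pairx (cst (enc table_search))
  (consx (Cp CONST_PROG [c]) (consx (Cp CONST_PROG [a]) (consx (Cp CONST_PROG [r]) Z))))"

lemma eval_TABLE_RUN_INDEX [simp]:
  "eval (TABLE_RUN_INDEX c a r) env = table_run_index (eval c env) (eval a env) (eval r env)"
  by (simp add: TABLE_RUN_INDEX_def table_run_index_def cons_code_def)

lemma scoped_TABLE_RUN_INDEX [simp]:
  "scoped k (TABLE_RUN_INDEX c a r) = (scoped k c \<and> scoped k a \<and> scoped k r)"
  by (auto simp: TABLE_RUN_INDEX_def)

lemma fns_comp_by_TABLE_RUN_INDEX [simp]: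
  "fns_comp_by orc (TABLE_RUN_INDEX c a r) = (fns_comp_by orc c \<and> fns_comp_by orc a \<and> fns_comp_by orc r)"
  by (auto simp: TABLE_RUN_INDEX_def)

section \<open>The diagonal function\<close>

definition settle :: "nat \<Rightarrow> nat" where
  "settle n = (if n \<in> halting then Suc (LEAST w. run_witness zero_graph w n (list_encode [n])) else 0)"

definition segment :: "nat set \<Rightarrow> nat \<Rightarrow> nat" where
  "segment X u = list_encode (rev (map (chi X) [0..<u]))"

definition settled_segment :: "nat set \<Rightarrow> nat \<Rightarrow> nat" where
  "settled_segment X n = prod_encode (settle n, segment X (settle n))"

definition diag_fun :: "nat set \<Rightarrow> nat \<Rightarrow> nat" where
  "diag_fun X x = (if table_run_index (pfst x) (list_encode [x]) (settled_segment X (psnd x)) \<in> halting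
     then psnd (LEAST w. run_witness (table_graph (settled_segment X (psnd x))) w (pfst x) (list_encode [x]))
     else 0)"

lemma table_graph_settled_segment: "table_graph (settled_segment X n) x z \<longleftrightarrow> x < settle n \<and> z = chi X x"
proof -
  have "x < settle n \<Longrightarrow> nth_code (settle n - Suc x) (segment X (settle n)) = chi X x"
    by (simp add: segment_def rev_nth)
  then show ?thesis by (auto simp: table_graph_def settled_segment_def)
qed

lemma comp_by_settle: "comp_by (chi halting) settle"
proof -
  let ?guard = "Fn (chi halting) (V 0)"
  let ?test = "Cp (RUN_WITNESS ZERO_GRAPH) [V 0, V 1, consx (V 1) Z, Z]"
  have settle_eq: "settle = (\<lambda>n. if holds ?guard [n] then eval (S (V 0)) [LEAST w. holds ?test [w, n], n] else 0)"
    by (simp add: fun_eq_iff settle_def chi_def cons_code_def)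
  have "\<exists>w. holds ?test [w, n]" if "holds ?guard [n]" for n
    using that halting_iff_run_witness by (auto simp: chi_def cons_code_def split: if_splits)
  then show ?thesis unfolding settle_eq by (intro comp_by_guarded_Least) (simp_all add: comp_by_oracle)
qed

definition "SEGMENT X = Rec (V 0) Z (consx (Fn (chi X) (V 0)) (V 1))"

lemma eval_SEGMENT [simp]: "eval (SEGMENT X) [u] = segment X u"
  by (induction u) (simp_all add: SEGMENT_def segment_def)

lemma scoped_SEGMENT [simp]: "scoped (Suc 0) (SEGMENT X)"
  by (simp add: SEGMENT_def)

lemma fns_comp_by_SEGMENT [simp]: "fns_comp_by orc (SEGMENT X) = comp_by orc (chi X)"
  by (simp add: SEGMENT_def)

definition "SETTLED_SEGMENT X t = pairx (Fn settle t) (Cp (SEGMENT X) [Fn settle t])"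

lemma eval_SETTLED_SEGMENT [simp]: "eval (SETTLED_SEGMENT X t) env = settled_segment X (eval t env)"
  by (simp add: SETTLED_SEGMENT_def settled_segment_def)

lemma scoped_SETTLED_SEGMENT [simp]: "scoped k (SETTLED_SEGMENT X t) = scoped k t"
  by (simp add: SETTLED_SEGMENT_def)

lemma fns_comp_by_SETTLED_SEGMENT [simp]:
  "fns_comp_by orc (SETTLED_SEGMENT X t) = (comp_by orc settle \<and> comp_by orc (chi X) \<and> fns_comp_by orc t)"
  by (auto simp: SETTLED_SEGMENT_def)

lemma Delta02_diag_fun:
  assumes "Delta02_set X"
  shows "Delta02_fun (diag_fun X)"
proof -
  let ?r = "SETTLED_SEGMENT X (psndx (V 0))"
  let ?guard = "Fn (chi halting) (TABLE_RUN_INDEX (pfstx (V 0)) (consx (V 0) Z) ?r)"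
  let ?test = "Cp (RUN_WITNESS TABLE_GRAPH) [V 0, pfstx (V 1), consx (V 1) Z, SETTLED_SEGMENT X (psndx (V 1))]"
  have diag_eq: "diag_fun X = (\<lambda>x. if holds ?guard [x] then eval (psndx (V 0)) [LEAST w. holds ?test [w, x], x] else 0)"
    by (simp add: fun_eq_iff diag_fun_def chi_def cons_code_def)
  have "\<exists>w. holds ?test [w, x]" if "holds ?guard [x]" for x
    using that table_run_index_halting by (auto simp: chi_def cons_code_def split: if_splits)
  then show ?thesis
    using assms comp_by_settle unfolding Delta02_fun_def Delta02_set_def diag_eq
    by (intro comp_by_guarded_Least) (simp_all add: comp_by_oracle)
qed

lemma settle_le_run_witness:
  assumes p: "\<forall>x. evalo (chi X) p [x] (g x)" and avoids: "\<forall>x. g x \<noteq> diag_fun X x"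
    and w: "run_witness (oracle_graph (chi X)) w (enc p) (list_encode [prod_encode (enc p, n)])"
  shows "settle n \<le> w"
proof (rule ccontr)
  assume "\<not> settle n \<le> w"
  let ?x = "prod_encode (enc p, n)" and ?r = "settled_segment X n"
  let ?least = "LEAST w. run_witness (table_graph ?r) w (enc p) (list_encode [?x])"
  have table_run: "run_witness (table_graph ?r) w (enc p) (list_encode [?x])"
    using w by (rule run_witness_use) (use \<open>\<not> settle n \<le> w\<close> in \<open>auto simp: table_graph_settled_segment\<close>)
  then have least: "run_witness (table_graph ?r) ?least (enc p) (list_encode [?x])" by (rule LeastI)
  have "table_run_index (enc p) (list_encode [?x]) ?r \<in> halting"
    using table_run table_run_index_halting by blast
  then have "diag_fun X ?x = psnd ?least" by (simp add: diag_fun_def)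
  moreover have "\<forall>x z. table_graph ?r x z \<longrightarrow> z = chi X x" by (simp add: table_graph_settled_segment)
  then have "evalo (chi X) p [?x] (psnd ?least)" using run_witness_sound[OF least] by simp
  ultimately show False using p avoids evalo_deterministic by metis
qed

lemma turing_le_halting_if_settle_bounded:
  assumes "comp_by (chi X) b" and bound: "\<And>n. settle n \<le> b n"
  shows "turing_le halting X"
proof -
  let ?e = "bexx (S (Fn b (V 0))) (Cp (RUN_WITNESS ZERO_GRAPH) [V 0, V 1, consx (V 1) Z, Z])"
  have "n \<in> halting \<longleftrightarrow> (\<exists>w<Suc (b n). run_witness zero_graph w n (list_encode [n]))" for n
  proof
    assume "n \<in> halting"
    then obtain w where "run_witness zero_graph w n (list_encode [n])"
      using halting_iff_run_witness by blast
    then have "run_witness zero_graph (LEAST w. run_witness zero_graph w n (list_encode [n])) n (list_encode [n])"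
      by (rule LeastI)
    moreover have "(LEAST w. run_witness zero_graph w n (list_encode [n])) < Suc (b n)"
      using bound[of n] \<open>n \<in> halting\<close> by (simp add: settle_def)
    ultimately show "\<exists>w<Suc (b n). run_witness zero_graph w n (list_encode [n])" by blast
  qed (use halting_iff_run_witness in blast)
  moreover have "holds (Cp (RUN_WITNESS ZERO_GRAPH) [V 0, V 1, consx (V 1) Z, Z]) [w, n] \<longleftrightarrow>
      run_witness zero_graph w n (list_encode [n])" for w n
    by (simp add: cons_code_def)
  ultimately have "holds ?e [n] \<longleftrightarrow> n \<in> halting" for n by simp
  moreover have "eval ?e [n] = (if holds ?e [n] then 1 else 0)" for n
    by (simp only: eval_bexx holds_simps holds_def) simp
  ultimately have "eval ?e [n] = chi halting n" for n by (simp add: chi_def)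
  then show ?thesis
    unfolding turing_le_def using assms(1) by (intro comp_by_pexp[where e = ?e]) simp_all
qed

lemma turing_le_halting_of_diagonalizing:
  assumes "comp_by (chi X) g" and avoids: "\<forall>x. g x \<noteq> diag_fun X x"
  shows "turing_le halting X"
proof -
  obtain p where p: "\<forall>x. evalo (chi X) p [x] (g x)" using assms(1) unfolding comp_by_def by blast
  let ?test = "Cp (RUN_WITNESS (GRAPH (chi X))) [V 0, cst (enc p), consx (pairx (cst (enc p)) (V 1)) Z, Z]"
  have holds_test: "holds ?test [w, n] \<longleftrightarrow>
      run_witness (oracle_graph (chi X)) w (enc p) (list_encode [prod_encode (enc p, n)])" for w n
    by (simp add: cons_code_def)
  have witness: "\<exists>w. holds ?test [w, n]" for n
    using run_witness_complete[OF p[rule_format]] holds_test by blast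
  have "settle n \<le> (LEAST w. holds ?test [w, n])" for n
    using settle_le_run_witness[OF p avoids] LeastI_ex[OF witness] holds_test by blast
  moreover have "comp_by (chi X) (\<lambda>n. LEAST w. holds ?test [w, n])"
    using witness by (intro comp_by_Least) (simp_all add: comp_by_oracle)
  ultimately show ?thesis by (intro turing_le_halting_if_settle_bounded)
qed

theorem theorem6:
  fixes X :: "nat set"
  assumes "Delta02_set X"
    and "\<not> turing_le halting X"
  shows "\<exists>f :: nat \<Rightarrow> nat. Delta02_fun f \<and>
           \<not> (\<exists>g :: nat \<Rightarrow> nat. comp_by (chi X) g \<and> (\<forall>x. g x \<noteq> f x))"
  using Delta02_diag_fun[OF assms(1)] turing_le_halting_of_diagonalizing assms(2) by blast

end
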